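(* Let $G\in L^1_{loc}(\mathbb{R}^d)$ be real-valued with $G\ge0$ $\lambda^d$-a.e. (or $G\le 0$ $\lambda^d$-a.e.), and let $\dot L$ be a Lévy white noise with characteristic triplet $(a,\gamma,\nu)$. If $s(\varphi):=\langle\dot L,G\ast\varphi\rangle$, $\varphi\in\mathcal{D}(\mathbb{R}^d)$, defines a generalized random process, then for every $R>0$ $$\int_{\mathbb{R}}\mathbf{1}_{|r|>1}\,d_{G_R}\!\left(\frac{1}{|r|}\right)\nu(dr)<\infty,\qquad\text{where } G_R(x):=\int_{B_R(x)}|G(y)|\lambda^d(dy).$$
   Context: $\mathcal{D}(\mathbb{R}^d)$ is the space of smooth compactly supported real functions with its usual topology. A generalized random process is a linear (a.s.) map $s:\mathcal{D}(\mathbb{R}^d)\to L^0(\Omega)$ continuous with respect to convergence in probability. A Lévy white noise with characteristic triplet $(a,\gamma,\nu)$ is a generalized random process $\dot L$ with $\mathbb{E}\exp(i\langle\dot L,\varphi\rangle)=\exp\big(\int_{\mathbb{R}^d}\psi(\varphi(x))dx\big)$, $\psi(z)=i\gamma z-\tfrac12 az^2+\int(e^{ixz}-1-ixz\mathbf{1}_{|x|\le1})\nu(dx)$; it extends to a Lévy basis $L$, and $\langle\dot L,f\rangle:=\int f\,dL$ for measurable $f$ integrable with respect to $L$ in the sense of Rajput and Rosiński (in particular "$s$ defines a generalized process" includes that $G\ast\varphi$ is so integrable for each $\varphi$). $d_f(\alpha):=\lambda^d(\{x:|f(x)|>\alpha\})$; $B_R(x)$ is the open Euclidean ball. *)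

theory Defs
  imports "HOL-Probability.Probability"
begin

fun pderivs :: "('a::euclidean_space) list \<Rightarrow> ('a \<Rightarrow> real) \<Rightarrow> ('a \<Rightarrow> real)" where
  "pderivs [] f = f"
| "pderivs (v # vs) f = (\<lambda>x. frechet_derivative (pderivs vs f) (at x) v)"

definition smooth_fun :: "('a::euclidean_space \<Rightarrow> real) \<Rightarrow> bool" where
  "smooth_fun f \<longleftrightarrow> (\<forall>vs \<in> lists Basis. pderivs vs f differentiable_on UNIV)"

definition fsupp :: "('a::euclidean_space \<Rightarrow> real) \<Rightarrow> 'a set" where
  "fsupp f = closure {x. f x \<noteq> 0}"

definition test_functions :: "('a::euclidean_space \<Rightarrow> real) set" where
  "test_functions = {f. smooth_fun f \<and> compact (fsupp f)}"

definition D_converges :: "(nat \<Rightarrow> 'a::euclidean_space \<Rightarrow> real) \<Rightarrow> ('a \<Rightarrow> real) \<Rightarrow> bool" where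
  "D_converges fs f \<longleftrightarrow> (\<forall>n. fs n \<in> test_functions) \<and> f \<in> test_functions \<and>
     (\<exists>K. compact K \<and> fsupp f \<subseteq> K \<and> (\<forall>n. fsupp (fs n) \<subseteq> K)) \<and>
     (\<forall>vs \<in> lists Basis. uniform_limit UNIV (\<lambda>n. pderivs vs (fs n)) (pderivs vs f) sequentially)"

definition conv_in_prob :: "'w measure \<Rightarrow> (nat \<Rightarrow> 'w \<Rightarrow> real) \<Rightarrow> ('w \<Rightarrow> real) \<Rightarrow> bool" where
  "conv_in_prob M X Y \<longleftrightarrow>
     (\<forall>e>0. (\<lambda>n. measure M {\<omega> \<in> space M. \<bar>X n \<omega> - Y \<omega>\<bar> > e}) \<longlonglongrightarrow> 0)"

definition gen_random_process ::
  "'w measure \<Rightarrow> (('a::euclidean_space \<Rightarrow> real) \<Rightarrow> 'w \<Rightarrow> real) \<Rightarrow> bool" where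
  "gen_random_process M s \<longleftrightarrow>
     (\<forall>\<phi> \<in> test_functions. s \<phi> \<in> borel_measurable M) \<and>
     (\<forall>\<phi> \<in> test_functions. \<forall>\<psi> \<in> test_functions. \<forall>a b :: real.
        AE \<omega> in M. s (\<lambda>x. a * \<phi> x + b * \<psi> x) \<omega> = a * s \<phi> \<omega> + b * s \<psi> \<omega>) \<and>
     (\<forall>\<phi>s \<phi>. D_converges \<phi>s \<phi> \<longrightarrow> conv_in_prob M (\<lambda>n. s (\<phi>s n)) (s \<phi>))"

definition levy_measure :: "real measure \<Rightarrow> bool" where
  "levy_measure \<nu> \<longleftrightarrow> sets \<nu> = sets borel \<and> emeasure \<nu> {0} = 0 \<and>
     (\<integral>\<^sup>+ r. ennreal (min 1 (r\<^sup>2)) \<partial>\<nu>) < \<infinity>"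

definition levy_exponent :: "real \<Rightarrow> real \<Rightarrow> real measure \<Rightarrow> real \<Rightarrow> complex" where
  "levy_exponent a \<gamma> \<nu> z =
     \<i> * complex_of_real (\<gamma> * z) - complex_of_real (a * z\<^sup>2 / 2) +
     (\<integral> x. (cis (x * z) - 1 - \<i> * complex_of_real (x * z * indicator {x. \<bar>x\<bar> \<le> 1} x)) \<partial>\<nu>)"

definition bounded_borel :: "'a::euclidean_space set set" where
  "bounded_borel = {A. A \<in> sets borel \<and> bounded A}"

definition levy_basis ::
  "'w measure \<Rightarrow> ('a::euclidean_space set \<Rightarrow> 'w \<Rightarrow> real) \<Rightarrow> real \<Rightarrow> real \<Rightarrow> real measure \<Rightarrow> bool" where
  "levy_basis M L a \<gamma> \<nu> \<longleftrightarrow>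
     (\<forall>A \<in> bounded_borel. L A \<in> borel_measurable M) \<and>
     (\<forall>A \<in> bounded_borel. \<forall>t::real.
        (\<integral> \<omega>. cis (t * L A \<omega>) \<partial>M) = exp (complex_of_real (measure lebesgue A) * levy_exponent a \<gamma> \<nu> t)) \<and>
     (\<forall>\<A>. finite \<A> \<and> \<A> \<subseteq> bounded_borel \<and> disjoint \<A> \<longrightarrow>
        prob_space.indep_vars M (\<lambda>_. borel) L \<A>) \<and>
     (\<forall>A :: nat \<Rightarrow> 'a set. range A \<subseteq> bounded_borel \<and> disjoint_family A \<and> bounded (\<Union>n. A n) \<longrightarrow>
        (AE \<omega> in M. (\<lambda>n. L (A n) \<omega>) sums L (\<Union>n. A n) \<omega>))"

text \<open>Simple functions: lists of (coefficient, bounded Borel set) with pairwise disjoint sets.\<close>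
definition valid_simple :: "(real \<times> 'a::euclidean_space set) list \<Rightarrow> bool" where
  "valid_simple ps \<longleftrightarrow> (\<forall>p \<in> set ps. snd p \<in> bounded_borel) \<and>
     (\<forall>i < length ps. \<forall>j < length ps. i \<noteq> j \<longrightarrow> snd (ps ! i) \<inter> snd (ps ! j) = {})"

definition simple_fun_of :: "(real \<times> 'a set) list \<Rightarrow> 'a \<Rightarrow> real" where
  "simple_fun_of ps x = (\<Sum>p \<leftarrow> ps. fst p * indicator (snd p) x)"

definition simple_int :: "('a set \<Rightarrow> 'w \<Rightarrow> real) \<Rightarrow> (real \<times> 'a set) list \<Rightarrow> 'a set \<Rightarrow> 'w \<Rightarrow> real" where
  "simple_int L ps A \<omega> = (\<Sum>p \<leftarrow> ps. fst p * L (A \<inter> snd p) \<omega>)"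

text \<open>rr_integral M L f X: f is integrable w.r.t. L (Rajput--Rosinski) and X is (a version of) its integral.\<close>
definition rr_integral ::
  "'w measure \<Rightarrow> ('a::euclidean_space set \<Rightarrow> 'w \<Rightarrow> real) \<Rightarrow> ('a \<Rightarrow> real) \<Rightarrow> ('w \<Rightarrow> real) \<Rightarrow> bool" where
  "rr_integral M L f X \<longleftrightarrow>
     (\<exists>ps :: nat \<Rightarrow> (real \<times> 'a set) list.
        (\<forall>n. valid_simple (ps n)) \<and>
        (AE x in lebesgue. (\<lambda>n. simple_fun_of (ps n) x) \<longlonglongrightarrow> f x) \<and>
        (\<forall>A \<in> sets borel. \<exists>Y. Y \<in> borel_measurable M \<and> conv_in_prob M (\<lambda>n. simple_int L (ps n) A) Y) \<and>
        X \<in> borel_measurable M \<and> conv_in_prob M (\<lambda>n. simple_int L (ps n) UNIV) X)"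

definition levy_white_noise ::
  "'w measure \<Rightarrow> (('a::euclidean_space \<Rightarrow> real) \<Rightarrow> 'w \<Rightarrow> real) \<Rightarrow> real \<Rightarrow> real \<Rightarrow> real measure \<Rightarrow> bool" where
  "levy_white_noise M Ldot a \<gamma> \<nu> \<longleftrightarrow> gen_random_process M Ldot \<and>
     (\<forall>\<phi> \<in> test_functions.
        (\<integral> \<omega>. cis (Ldot \<phi> \<omega>) \<partial>M) = exp (\<integral> x. levy_exponent a \<gamma> \<nu> (\<phi> x) \<partial>lborel))"

definition convol :: "('a::euclidean_space \<Rightarrow> real) \<Rightarrow> ('a \<Rightarrow> real) \<Rightarrow> 'a \<Rightarrow> real" where
  "convol G \<phi> x = (\<integral> y. G (x - y) * \<phi> y \<partial>lebesgue)"

definition locally_integrable :: "('a::euclidean_space \<Rightarrow> real) \<Rightarrow> bool" where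
  "locally_integrable G \<longleftrightarrow> (\<forall>K. compact K \<longrightarrow> set_integrable lebesgue K G)"

definition distrib_fun :: "('a::euclidean_space \<Rightarrow> real) \<Rightarrow> real \<Rightarrow> ennreal" where
  "distrib_fun f \<alpha> = emeasure lebesgue {x. \<bar>f x\<bar> > \<alpha>}"

definition ball_avg :: "('a::euclidean_space \<Rightarrow> real) \<Rightarrow> real \<Rightarrow> 'a \<Rightarrow> real" where
  "ball_avg G R x = (\<integral> y \<in> ball x R. \<bar>G y\<bar> \<partial>lebesgue)"

end

theory Submission
  imports Defs "HOL-Computational_Algebra.Polynomial"
begin

text \<open>
  Test \<open>s\<close> against a smooth bump \<open>\<phi> \<ge> 0\<close> with \<open>\<phi> \<ge> 1\<close> on \<open>B\<^sub>R(0)\<close>; since \<open>G\<close> has constant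
  sign, \<open>f = G \<star> \<phi>\<close> satisfies \<open>\<bar>f\<bar> \<ge> G\<^sub>R\<close>. The variable \<open>s(\<phi>)\<close> is the limit in probability of the
  integrals \<open>X\<^sub>n\<close> of simple functions \<open>f\<^sub>n \<longrightarrow> f\<close> against the Levy basis. By independence the
  characteristic function of \<open>X\<^sub>n\<close> is an explicit product, of modulus at most \<open>exp (- E(f\<^sub>n, t))\<close>
  with \<open>E(g, t) = \<integral>\<integral> (1 - cos (t g(x) r)) dx \<nu>(dr)\<close> (\<open>cos_energy\<close>). The characteristic function
  of the limit is \<open>\<ge> 1/2\<close> near \<open>0\<close>, so \<open>E(f\<^sub>n, t)\<close> is eventually bounded for small \<open>t\<close>, hence by
  \<open>1 - cos 2v \<le> 4 (1 - cos v)\<close> for all \<open>t \<le> 2\<close>, and by Fatou \<open>E(f, t)\<close> is bounded on \<open>[0, 2]\<close>.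
  Finally \<open>\<integral>\<^sub>0\<^sup>2 (1 - cos (t u)) dt \<ge> 1\<close> for \<open>\<bar>u\<bar> \<ge> 1\<close>, so by Fubini
  \<open>\<integral>\<^bsub>\<bar>r\<bar>>1\<^esub> \<lambda>{\<bar>f r\<bar> \<ge> 1} \<nu>(dr) \<le> \<integral>\<^sub>0\<^sup>2 E(f, t) dt < \<infinity>\<close>, and the integrand dominates \<open>d\<^bsub>G\<^sub>R\<^esub>(1/\<bar>r\<bar>)\<close>.
\<close>

section \<open>A smooth bump function\<close>

text \<open>\<open>flat_deriv m\<close> is the \<open>m\<close>-th derivative of \<open>t \<mapsto> exp (-1/t)\<close> (extended by \<open>0\<close> for \<open>t \<le> 0\<close>),
  of the form \<open>P\<^sub>m(1/t) exp (-1/t)\<close> with \<open>P\<^sub>m = flat_poly m\<close>.\<close>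

fun flat_poly :: "nat \<Rightarrow> real poly" where
  "flat_poly 0 = 1"
| "flat_poly (Suc m) = [:0,0,1:] * (flat_poly m - pderiv (flat_poly m))"

definition flat_deriv :: "nat \<Rightarrow> real \<Rightarrow> real" where
  "flat_deriv m t = (if t > 0 then poly (flat_poly m) (1/t) * exp (-1/t) else 0)"

lemma flat_deriv_nonpos: "t \<le> 0 \<Longrightarrow> flat_deriv m t = 0"
  by (simp add: flat_deriv_def)

lemma poly_times_exp_neg_tendsto_0: "((\<lambda>y. poly p y * exp (-y)) \<longlongrightarrow> (0::real)) at_top"
proof -
  have "((\<lambda>y. \<Sum>k\<le>degree p. coeff p k * (y ^ k / exp y)) \<longlongrightarrow> (\<Sum>k\<le>degree p. coeff p k * 0)) at_top"
    by (intro tendsto_sum tendsto_mult tendsto_const tendsto_power_div_exp_0)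
  moreover have "(\<lambda>y. \<Sum>k\<le>degree p. coeff p k * (y ^ k / exp y)) = (\<lambda>y. poly p y * exp (-y))"
    by (auto simp: poly_altdef sum_distrib_right exp_minus divide_inverse mult.assoc)
  ultimately show ?thesis by simp
qed

lemma flat_deriv_div_tendsto_0: "((\<lambda>t. flat_deriv m t / t) \<longlongrightarrow> 0) (at_right (0::real))"
proof -
  have "((\<lambda>y. poly ([:0,1:] * flat_poly m) y * exp (-y)) \<longlongrightarrow> (0::real)) at_top"
    by (rule poly_times_exp_neg_tendsto_0)
  then have "((\<lambda>t. poly ([:0,1:] * flat_poly m) (inverse t) * exp (- inverse t)) \<longlongrightarrow> (0::real)) (at_right 0)"
    using filterlim_compose filterlim_inverse_at_top_right by blast
  moreover have "eventually (\<lambda>t. poly ([:0,1:] * flat_poly m) (inverse t) * exp (- inverse t) = flat_deriv m t / t)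
      (at_right (0::real))"
    by (rule eventually_mono[OF eventually_at_right_less[of 0]])
       (simp add: flat_deriv_def inverse_eq_divide)
  ultimately show ?thesis by (rule Lim_transform_eventually)
qed

lemma has_real_derivative_flat_deriv: "(flat_deriv m has_real_derivative flat_deriv (Suc m) t) (at t)"
proof (cases "t > 0")
  case True
  have i: "((\<lambda>t. 1/t) has_real_derivative (- 1/t^2)) (at t)"
    using True DERIV_inverse[of t] by (simp add: divide_inverse power2_eq_square)
  have p: "((\<lambda>t. poly (flat_poly m) (1/t)) has_real_derivative poly (pderiv (flat_poly m)) (1/t) * (- 1/t^2)) (at t)"
    using DERIV_chain2[OF poly_DERIV i] .
  have e: "((\<lambda>t. exp (-1/t)) has_real_derivative exp (-1/t) * (1/t^2)) (at t)"
    using DERIV_chain2[OF DERIV_exp DERIV_minus[OF i]] by simp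
  have "((\<lambda>t. poly (flat_poly m) (1/t) * exp (-1/t)) has_real_derivative
      poly (pderiv (flat_poly m)) (1/t) * (- 1/t^2) * exp (-1/t) + poly (flat_poly m) (1/t) * (exp (-1/t) * (1/t^2))) (at t)"
    using DERIV_mult[OF p e] by (simp add: mult.commute)
  moreover have "poly (pderiv (flat_poly m)) (1/t) * (- 1/t^2) * exp (-1/t) + poly (flat_poly m) (1/t) * (exp (-1/t) * (1/t^2))
      = flat_deriv (Suc m) t"
    using True by (simp add: flat_deriv_def field_simps power2_eq_square)
  ultimately show ?thesis
    using has_field_derivative_transform_within_open[of "\<lambda>t. poly (flat_poly m) (1/t) * exp (-1/t)" _ t "{0<..}"]
      True by (auto simp: flat_deriv_def)
next
  case False
  show ?thesis
  proof (cases "t < 0")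
    case True
    then show ?thesis
      using has_field_derivative_transform_within_open[of "\<lambda>_. 0" 0 t "{..<0}" "flat_deriv m"]
      by (auto simp: flat_deriv_def)
  next
    case False
    with \<open>\<not> t > 0\<close> have t0: "t = 0" by simp
    have "((\<lambda>s. (flat_deriv m s - flat_deriv m 0) / (s - 0)) \<longlongrightarrow> 0) (at (0::real))"
    proof (rule filterlim_split_at)
      show "((\<lambda>s. (flat_deriv m s - flat_deriv m 0) / (s - 0)) \<longlongrightarrow> 0) (at_right (0::real))"
        using flat_deriv_div_tendsto_0[of m] by (simp add: flat_deriv_nonpos)
      have "eventually (\<lambda>s. 0 = (flat_deriv m s - flat_deriv m 0) / (s - 0)) (at_left (0::real))"
        by (rule eventually_mono[OF eventually_at_left_real[of "-1"]]) (auto simp: flat_deriv_nonpos)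
      then show "((\<lambda>s. (flat_deriv m s - flat_deriv m 0) / (s - 0)) \<longlongrightarrow> 0) (at_left (0::real))"
        by (rule Lim_transform_eventually[OF tendsto_const])
    qed
    then show ?thesis using t0 by (simp add: has_field_derivative_iff flat_deriv_nonpos)
  qed
qed

text \<open>A class of functions closed under directional derivatives, used to show that \<open>bump\<close> is
  smooth.\<close>

inductive flat_algebra :: "(real^'n \<Rightarrow> real) \<Rightarrow> bool" where
  const: "flat_algebra (\<lambda>x. c)"
| coord: "flat_algebra (\<lambda>x. flat_deriv m (\<sigma> * x$i + \<tau>))"
| add: "flat_algebra f \<Longrightarrow> flat_algebra g \<Longrightarrow> flat_algebra (\<lambda>x. f x + g x)"
| mult: "flat_algebra f \<Longrightarrow> flat_algebra g \<Longrightarrow> flat_algebra (\<lambda>x. f x * g x)"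

lemma flat_algebra_has_derivative:
  fixes f :: "real^'n \<Rightarrow> real"
  assumes "flat_algebra f"
  shows "\<exists>F. (\<forall>x. (f has_derivative F x) (at x)) \<and> (\<forall>v. flat_algebra (\<lambda>x. F x v))"
  using assms
proof induction
  case (const c)
  show ?case
    by (rule exI[of _ "\<lambda>x h. 0"]) (auto intro: flat_algebra.const)
next
  case (coord m \<sigma> i \<tau>)
  define F where "F x h = flat_deriv (Suc m) (\<sigma> * x$i + \<tau>) * (\<sigma> * h$i)" for x h :: "real^'n"
  have "((\<lambda>x. flat_deriv m (\<sigma> * x$i + \<tau>)) has_derivative F x) (at x)" for x
  proof -
    have l: "((\<lambda>x. \<sigma> * x$i + \<tau>) has_derivative (\<lambda>h. \<sigma> * h$i)) (at x)"
      by (auto intro!: derivative_eq_intros bounded_linear.has_derivative[OF bounded_linear_vec_nth])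
    have "(flat_deriv m has_derivative (\<lambda>h. flat_deriv (Suc m) (\<sigma> * x$i + \<tau>) * h)) (at (\<sigma> * x$i + \<tau>))"
      using has_real_derivative_flat_deriv by (simp add: has_field_derivative_imp_has_derivative)
    from has_derivative_compose[OF l this] show ?thesis
      unfolding F_def[abs_def] by simp
  qed
  moreover have "flat_algebra (\<lambda>x. F x v)" for v
    by (auto simp: F_def intro!: flat_algebra.intros)
  ultimately show ?case by blast
next
  case (add f g)
  then obtain F G where F: "\<forall>x. (f has_derivative F x) (at x)" "\<forall>v. flat_algebra (\<lambda>x. F x v)"
    and G: "\<forall>x. (g has_derivative G x) (at x)" "\<forall>v. flat_algebra (\<lambda>x. G x v)" by blast
  show ?case
    by (rule exI[of _ "\<lambda>x h. F x h + G x h"])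
       (auto intro!: has_derivative_add flat_algebra.intros F[rule_format] G[rule_format])
next
  case (mult f g)
  then obtain F G where F: "\<forall>x. (f has_derivative F x) (at x)" "\<forall>v. flat_algebra (\<lambda>x. F x v)"
    and G: "\<forall>x. (g has_derivative G x) (at x)" "\<forall>v. flat_algebra (\<lambda>x. G x v)" by blast
  show ?case
    by (rule exI[of _ "\<lambda>x h. f x * G x h + F x h * g x"])
       (auto intro!: has_derivative_mult flat_algebra.intros F[rule_format] G[rule_format] mult.hyps)
qed

lemma flat_algebra_pderivs: "flat_algebra f \<Longrightarrow> flat_algebra (pderivs vs f)"
proof (induction vs)
  case (Cons v vs)
  then obtain F where F: "\<forall>x. (pderivs vs f has_derivative F x) (at x)" "\<forall>v. flat_algebra (\<lambda>x. F x v)"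
    using flat_algebra_has_derivative by blast
  have "pderivs (v # vs) f = (\<lambda>x. F x v)"
    using frechet_derivative_at[OF F(1)[rule_format]] by auto
  then show ?case using F(2) by simp
qed simp

lemma flat_algebra_smooth: "flat_algebra f \<Longrightarrow> smooth_fun f"
  unfolding smooth_fun_def differentiable_on_def differentiable_def
  by (metis flat_algebra_pderivs flat_algebra_has_derivative)

lemma flat_algebra_prod:
  "finite S \<Longrightarrow> (\<And>i. i \<in> S \<Longrightarrow> flat_algebra (f i)) \<Longrightarrow> flat_algebra (\<lambda>x. \<Prod>i\<in>S. f i x)"
  by (induction S rule: finite_induct) (auto intro!: flat_algebra.intros)

lemma flat_deriv_0_eq: "flat_deriv 0 t = (if t > 0 then exp (-1/t) else 0)"
  by (simp add: flat_deriv_def)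

lemma flat_deriv_0_nonneg: "0 \<le> flat_deriv 0 t"
  by (simp add: flat_deriv_0_eq)

lemma flat_deriv_0_le_1: "flat_deriv 0 t \<le> 1"
  by (simp add: flat_deriv_0_eq)

lemma flat_deriv_0_ge: "t \<ge> 1 \<Longrightarrow> flat_deriv 0 t \<ge> exp (-1)"
  by (simp add: flat_deriv_0_eq divide_le_eq_1)

text \<open>The factor \<open>exp 2 ^ CARD('n)\<close> compensates \<open>flat_deriv 0 t \<ge> exp (-1)\<close> for \<open>t \<ge> 1\<close>, so that
  \<open>bump c \<ge> 1\<close> on the ball of radius \<open>c - 1\<close>.\<close>

definition bump :: "real \<Rightarrow> real^'n \<Rightarrow> real" where
  "bump c x = exp 2 ^ CARD('n) * (\<Prod>i\<in>UNIV. flat_deriv 0 (c - x$i) * flat_deriv 0 (c + x$i))"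

lemma flat_algebra_bump: "flat_algebra (bump c)"
proof -
  have "flat_algebra (\<lambda>x::real^'n. \<Prod>i\<in>UNIV. flat_deriv 0 ((-1) * x$i + c) * flat_deriv 0 (1 * x$i + c))"
    by (intro flat_algebra_prod flat_algebra.mult flat_algebra.coord) simp
  from flat_algebra.mult[OF flat_algebra.const this] show ?thesis
    unfolding bump_def by (simp add: add.commute)
qed

lemma bump_nonneg: "0 \<le> bump c x"
  unfolding bump_def by (intro mult_nonneg_nonneg prod_nonneg) (auto simp: flat_deriv_0_nonneg)

lemma bump_le: "bump c (x :: real^'n) \<le> exp 2 ^ CARD('n)"
proof -
  have "(\<Prod>i\<in>UNIV. flat_deriv 0 (c - x$i) * flat_deriv 0 (c + x$i)) \<le> (\<Prod>i\<in>(UNIV::'n set). 1)"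
    by (intro prod_mono) (auto simp: flat_deriv_0_nonneg flat_deriv_0_le_1 intro: mult_le_one)
  then show ?thesis unfolding bump_def by simp
qed

lemma bump_eq_0_if_coord_ge:
  assumes "\<bar>x$i\<bar> \<ge> c"
  shows "bump c x = 0"
proof -
  have "flat_deriv 0 (c - x$i) * flat_deriv 0 (c + x$i) = 0"
    using assms by (cases "x$i \<ge> 0") (auto simp: flat_deriv_nonpos)
  then show ?thesis unfolding bump_def by auto
qed

lemma bump_eq_0_if_norm_ge:
  fixes x :: "real^'n"
  assumes "c * real CARD('n) \<le> norm x"
  shows "bump c x = 0"
proof (rule ccontr)
  assume "bump c x \<noteq> 0"
  then have lt: "\<bar>x$i\<bar> < c" for i
    using bump_eq_0_if_coord_ge[where x = x and i = i and c = c] by linarith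
  have "norm x \<le> (\<Sum>i\<in>UNIV. \<bar>x$i\<bar>)"
    by (rule norm_le_l1_cart)
  also have "\<dots> < (\<Sum>i\<in>(UNIV::'n set). c)"
    using lt by (intro sum_strict_mono) auto
  also have "\<dots> = c * real CARD('n)"
    by simp
  finally show False using assms by simp
qed

lemma bump_ge_1:
  fixes x :: "real^'n"
  assumes "norm x < R" "R + 1 \<le> c"
  shows "bump c x \<ge> 1"
proof -
  define P where "P = (\<Prod>i\<in>UNIV. flat_deriv 0 (c - x$i) * flat_deriv 0 (c + x$i))"
  have "(\<Prod>i\<in>(UNIV::'n set). exp (-1) * exp (-1)) \<le> P"
    unfolding P_def
  proof (intro prod_mono conjI)
    fix i
    have "c - x$i \<ge> 1" "c + x$i \<ge> 1"
      using component_le_norm_cart[of x i] assms by auto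
    then show "exp (-1) * exp (-1) \<le> flat_deriv 0 (c - x$i) * flat_deriv 0 (c + x$i)"
      by (intro mult_mono flat_deriv_0_ge) (auto simp: flat_deriv_0_nonneg)
  qed auto
  then have "exp 2 ^ CARD('n) * (\<Prod>i\<in>(UNIV::'n set). exp (-1) * exp (-1)) \<le> exp 2 ^ CARD('n) * P"
    by (rule mult_left_mono) simp
  moreover have "exp (2::real) ^ CARD('n) * (\<Prod>i\<in>(UNIV::'n set). exp (-1) * exp (-1)) = 1"
    by (simp add: power_mult_distrib[symmetric] exp_add[symmetric])
  ultimately have "1 \<le> exp 2 ^ CARD('n) * P"
    by linarith
  then show ?thesis
    by (simp add: bump_def P_def)
qed

lemma bump_in_test_functions: "(bump c :: real^'n \<Rightarrow> real) \<in> test_functions"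
proof -
  have "{x::real^'n. bump c x \<noteq> 0} \<subseteq> cball 0 (c * real CARD('n))"
  proof
    fix x :: "real^'n"
    assume "x \<in> {x. bump c x \<noteq> 0}"
    then show "x \<in> cball 0 (c * real CARD('n))"
      using bump_eq_0_if_norm_ge[of c x] by (cases "c * real CARD('n) \<le> norm x") auto
  qed
  then have "compact (fsupp (bump c :: real^'n \<Rightarrow> real))"
    unfolding fsupp_def compact_eq_bounded_closed
    using bounded_cball bounded_closure bounded_subset by blast
  then show ?thesis
    unfolding test_functions_def using flat_algebra_smooth[OF flat_algebra_bump] by simp
qed

lemma continuous_on_bump: "continuous_on UNIV (bump c :: real^'n \<Rightarrow> real)"
proof -
  obtain F where "\<forall>x. ((bump c :: real^'n \<Rightarrow> real) has_derivative F x) (at x)"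
    using flat_algebra_has_derivative[OF flat_algebra_bump] by blast
  then show ?thesis
    by (meson continuous_at_imp_continuous_on has_derivative_continuous)
qed

lemma lebesgue_reflect:
  fixes x :: "'a::euclidean_space"
  shows "lebesgue = distr lebesgue lebesgue (\<lambda>y. x - y)"
    and "(\<lambda>y. x - y) \<in> lebesgue \<rightarrow>\<^sub>M lebesgue"
proof -
  have eq: "(\<lambda>y. x + (\<Sum>j\<in>Basis. ((-1) * (y \<bullet> j)) *\<^sub>R j)) = (\<lambda>y::'a. x - y)"
  proof
    fix y :: 'a
    have "(\<Sum>j\<in>Basis. ((-1) * (y \<bullet> j)) *\<^sub>R j) = - (\<Sum>j\<in>Basis. (y \<bullet> j) *\<^sub>R j)"
      by (simp add: sum_negf[symmetric])
    then show "x + (\<Sum>j\<in>Basis. ((-1) * (y \<bullet> j)) *\<^sub>R j) = x - y"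
      by (simp add: euclidean_representation)
  qed
  have "lebesgue = density (distr lebesgue lebesgue (\<lambda>y::'a. x - y)) (\<lambda>_. (\<Prod>j\<in>(Basis::'a set). \<bar>-1::real\<bar>))"
    using lebesgue_affine_euclidean[of "\<lambda>_. -1" x] eq by simp
  then show "lebesgue = distr lebesgue lebesgue (\<lambda>y. x - y)"
    by (simp add: density_1)
  show "(\<lambda>y. x - y) \<in> lebesgue \<rightarrow>\<^sub>M lebesgue"
    using lebesgue_affine_measurable[of "\<lambda>_. -1" x] eq by simp
qed

lemma ball_avg_nonneg: "0 \<le> ball_avg G R x"
  unfolding ball_avg_def set_lebesgue_integral_def by (intro integral_nonneg_AE) auto

text \<open>The bump is only integrated against \<open>H\<close> on the compact set where it lives, which makes
  \<open>H z * bump c (x - z)\<close> integrable for a merely locally integrable \<open>H\<close>.\<close>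

lemma ball_avg_le_convol_bump:
  fixes H :: "real^'n \<Rightarrow> real"
  assumes li: "locally_integrable H" and pos: "AE z in lebesgue. H z \<ge> 0" and c: "R + 1 \<le> c"
  shows "ball_avg H R x \<le> convol H (bump c) x"
proof -
  define K where "K = cball x (c * real CARD('n))"
  define g where "g z = H z * bump c (x - z)" for z
  have HK: "integrable lebesgue (\<lambda>z. indicator K z *\<^sub>R H z)"
    using li unfolding locally_integrable_def set_integrable_def K_def by auto
  have bump_meas: "(\<lambda>z. bump c (x - z)) \<in> borel_measurable lebesgue"
    by (intro measurable_completion borel_measurable_continuous_on[OF continuous_on_bump]) simp
  have g_eq: "g z = (indicator K z *\<^sub>R H z) * bump c (x - z)" for z
  proof (cases "z \<in> K")
    case False
    then have "c * real CARD('n) \<le> norm (x - z)"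
      by (simp add: K_def dist_norm)
    then show ?thesis by (simp add: g_def bump_eq_0_if_norm_ge)
  qed (simp add: g_def)
  have g_int: "integrable lebesgue g"
  proof (rule Bochner_Integration.integrable_bound)
    show "integrable lebesgue (\<lambda>z. exp 2 ^ CARD('n) * (indicator K z *\<^sub>R H z))"
      using HK by simp
    show "g \<in> borel_measurable lebesgue"
      unfolding g_eq[abs_def] using HK bump_meas by (intro borel_measurable_times) auto
    show "AE z in lebesgue. norm (g z) \<le> norm (exp 2 ^ CARD('n) * (indicator K z *\<^sub>R H z))"
    proof (intro AE_I2)
      fix z
      have "norm (g z) = \<bar>indicator K z *\<^sub>R H z\<bar> * bump c (x - z)"
        by (simp add: g_eq abs_mult bump_nonneg)
      also have "\<dots> \<le> \<bar>indicator K z *\<^sub>R H z\<bar> * exp 2 ^ CARD('n)"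
        by (intro mult_left_mono bump_le) auto
      finally show "norm (g z) \<le> norm (exp 2 ^ CARD('n) * (indicator K z *\<^sub>R H z))"
        by (simp add: abs_mult mult.commute)
    qed
  qed
  have "convol H (bump c) x = (\<integral>y. g (x - y) \<partial>lebesgue)"
    by (simp add: convol_def g_def)
  also have "\<dots> = integral\<^sup>L (distr lebesgue lebesgue (\<lambda>y. x - y)) g"
    using lebesgue_reflect(2) borel_measurable_integrable[OF g_int] by (rule integral_distr[symmetric])
  also have "\<dots> = integral\<^sup>L lebesgue g"
    using lebesgue_reflect(1)[of x] by simp
  finally have conv_eq: "convol H (bump c) x = integral\<^sup>L lebesgue g" .
  have ball_int: "integrable lebesgue (\<lambda>z. indicator (ball x R) z *\<^sub>R \<bar>H z\<bar>)"
  proof -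
    have "set_integrable lebesgue (cball x R) H"
      using li unfolding locally_integrable_def by auto
    then have "set_integrable lebesgue (ball x R) H"
      by (rule set_integrable_subset) auto
    then show ?thesis using set_integrable_abs unfolding set_integrable_def by blast
  qed
  have "ball_avg H R x = integral\<^sup>L lebesgue (\<lambda>z. indicator (ball x R) z *\<^sub>R \<bar>H z\<bar>)"
    by (simp add: ball_avg_def set_lebesgue_integral_def)
  also have "\<dots> \<le> integral\<^sup>L lebesgue g"
  proof (rule integral_mono_AE[OF ball_int g_int])
    show "AE z in lebesgue. indicator (ball x R) z *\<^sub>R \<bar>H z\<bar> \<le> g z"
      using pos
    proof (rule eventually_mono)
      fix z assume Hz: "H z \<ge> 0"
      show "indicator (ball x R) z *\<^sub>R \<bar>H z\<bar> \<le> g z"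
      proof (cases "z \<in> ball x R")
        case True
        then have "bump c (x - z) \<ge> 1"
          using c by (intro bump_ge_1[where R = R]) (auto simp: dist_norm)
        then have "H z * 1 \<le> H z * bump c (x - z)"
          using Hz by (intro mult_left_mono) auto
        then show ?thesis using True Hz by (simp add: g_def)
      qed (use Hz in \<open>simp add: g_def bump_nonneg\<close>)
    qed
  qed
  finally show ?thesis using conv_eq by simp
qed

lemma ball_avg_le_abs_convol_bump:
  fixes G :: "real^'n \<Rightarrow> real"
  assumes li: "locally_integrable G"
    and sgn: "(AE x in lebesgue. G x \<ge> 0) \<or> (AE x in lebesgue. G x \<le> 0)"
  shows "ball_avg G R x \<le> \<bar>convol G (bump (R + 1)) x\<bar>"
  using sgn
proof
  assume "AE x in lebesgue. G x \<ge> 0"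
  then have "ball_avg G R x \<le> convol G (bump (R + 1)) x"
    by (rule ball_avg_le_convol_bump[OF li]) simp
  then show ?thesis by linarith
next
  assume neg: "AE x in lebesgue. G x \<le> 0"
  have "locally_integrable (\<lambda>x. - G x)"
    using li unfolding locally_integrable_def set_integrable_def by auto
  moreover have "AE x in lebesgue. - G x \<ge> 0"
    using neg by (rule eventually_mono) simp
  ultimately have "ball_avg (\<lambda>x. - G x) R x \<le> convol (\<lambda>x. - G x) (bump (R + 1)) x"
    by (rule ball_avg_le_convol_bump) simp
  then show ?thesis by (simp add: ball_avg_def convol_def)
qed

definition char_fun :: "'w measure \<Rightarrow> ('w \<Rightarrow> real) \<Rightarrow> real \<Rightarrow> complex" where
  "char_fun M X t = (\<integral>\<omega>. cis (t * X \<omega>) \<partial>M)"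

lemma cis_sum: "finite A \<Longrightarrow> cis (\<Sum>a\<in>A. f a) = (\<Prod>a\<in>A. cis (f a))"
  by (induction A rule: finite_induct) (auto simp: cis_mult[symmetric])

lemma norm_cis_diff_le: "cmod (cis a - cis b) \<le> \<bar>a - b\<bar>"
proof -
  have "cis a - cis b = cis b * (iexp (a - b) - 1)"
    by (simp add: cis_conv_exp algebra_simps exp_diff[symmetric] mult_exp_exp)
  then have "cmod (cis a - cis b) = cmod (iexp (a - b) - (\<Sum>k\<le>0. (\<i> * (a - b))^k / fact k))"
    by (simp add: norm_mult)
  also have "\<dots> \<le> \<bar>a - b\<bar>^(Suc 0) / fact (Suc 0)"
    by (rule iexp_approx1)
  finally show ?thesis by simp
qed

lemma borel_measurable_cis_mult:
  "f \<in> borel_measurable M \<Longrightarrow> (\<lambda>\<omega>. cis (c * f \<omega>)) \<in> borel_measurable M"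
proof -
  have "continuous_on UNIV (\<lambda>v. cis (c * v))"
    by (intro continuous_intros)
  then show "f \<in> borel_measurable M \<Longrightarrow> (\<lambda>\<omega>. cis (c * f \<omega>)) \<in> borel_measurable M"
    using borel_measurable_continuous_on[of "\<lambda>v. cis (c * v)" f M] by simp
qed

lemma integrable_cis_mult:
  assumes "prob_space M" "f \<in> borel_measurable M"
  shows "integrable M (\<lambda>\<omega>. cis (c * f \<omega>))"
proof -
  interpret prob_space M by fact
  show ?thesis
    by (rule integrable_const_bound[where B = 1]) (simp_all add: borel_measurable_cis_mult assms(2))
qed

lemma norm_char_fun_diff_le:
  assumes P: "prob_space M"
    and X: "X \<in> borel_measurable M" and Y: "Y \<in> borel_measurable M" and e: "e > 0"
  shows "cmod (char_fun M X t - char_fun M Y t)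
    \<le> \<bar>t\<bar> * e + 2 * measure M {\<omega> \<in> space M. \<bar>X \<omega> - Y \<omega>\<bar> > e}"
proof -
  interpret prob_space M by fact
  define A where "A = {\<omega> \<in> space M. \<bar>X \<omega> - Y \<omega>\<bar> > e}"
  have A: "A \<in> sets M" unfolding A_def using X Y by measurable
  have int_A: "integrable M (indicator A :: 'a \<Rightarrow> real)"
    using A by (intro integrable_real_indicator) (auto simp: emeasure_eq_measure)
  have "cmod (char_fun M X t - char_fun M Y t) = cmod (\<integral>\<omega>. cis (t * X \<omega>) - cis (t * Y \<omega>) \<partial>M)"
    unfolding char_fun_def
    by (simp add: Bochner_Integration.integral_diff integrable_cis_mult[OF P] X Y)
  also have "\<dots> \<le> (\<integral>\<omega>. cmod (cis (t * X \<omega>) - cis (t * Y \<omega>)) \<partial>M)"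
    by (rule integral_norm_bound)
  also have "\<dots> \<le> (\<integral>\<omega>. \<bar>t\<bar> * e + 2 * indicator A \<omega> \<partial>M)"
  proof (rule integral_mono)
    show "integrable M (\<lambda>\<omega>. cmod (cis (t * X \<omega>) - cis (t * Y \<omega>)))"
      using integrable_cis_mult[OF P X] integrable_cis_mult[OF P Y] by auto
    show "integrable M (\<lambda>\<omega>. \<bar>t\<bar> * e + 2 * indicator A \<omega>)"
      using int_A by auto
    fix \<omega> assume "\<omega> \<in> space M"
    show "cmod (cis (t * X \<omega>) - cis (t * Y \<omega>)) \<le> \<bar>t\<bar> * e + 2 * indicator A \<omega>"
    proof (cases "\<omega> \<in> A")
      case True
      have "cmod (cis (t * X \<omega>) - cis (t * Y \<omega>)) \<le> 2"
        using norm_triangle_ineq4[of "cis (t * X \<omega>)" "cis (t * Y \<omega>)"] by simp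
      moreover have "0 \<le> \<bar>t\<bar> * e" using e by simp
      ultimately show ?thesis using True by simp
    next
      case False
      with \<open>\<omega> \<in> space M\<close> have "\<bar>t * X \<omega> - t * Y \<omega>\<bar> \<le> \<bar>t\<bar> * e"
        by (auto simp: A_def right_diff_distrib[symmetric] abs_mult intro: mult_left_mono)
      then show ?thesis using norm_cis_diff_le[of "t * X \<omega>" "t * Y \<omega>"] False by simp
    qed
  qed
  also have "\<dots> = \<bar>t\<bar> * e + 2 * measure M A"
    using int_A A by (simp add: prob_space)
  finally show ?thesis by (simp add: A_def)
qed

lemma char_fun_tendsto_of_conv_in_prob:
  assumes P: "prob_space M"
    and X: "\<And>n. X n \<in> borel_measurable M" and Y: "Y \<in> borel_measurable M"
    and conv: "conv_in_prob M X Y"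
  shows "(\<lambda>n. char_fun M (X n) t) \<longlonglongrightarrow> char_fun M Y t"
proof (rule LIMSEQ_I)
  fix r :: real assume r: "r > 0"
  define e where "e = r / (2 * (\<bar>t\<bar> + 1))"
  have e: "e > 0" using r by (simp add: e_def)
  have te: "\<bar>t\<bar> * e < r / 2"
  proof -
    have "\<bar>t\<bar> * e = r / 2 * (\<bar>t\<bar> / (\<bar>t\<bar> + 1))" by (simp add: e_def field_simps)
    also have "\<dots> < r / 2 * 1" using r by (intro mult_strict_left_mono) auto
    finally show ?thesis by simp
  qed
  from conv e have "(\<lambda>n. measure M {\<omega> \<in> space M. \<bar>X n \<omega> - Y \<omega>\<bar> > e}) \<longlonglongrightarrow> 0"
    unfolding conv_in_prob_def by blast
  from LIMSEQ_D[OF this, of "r / 4"] r obtain N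
    where N: "\<And>n. n \<ge> N \<Longrightarrow> measure M {\<omega> \<in> space M. \<bar>X n \<omega> - Y \<omega>\<bar> > e} < r / 4"
    by auto
  show "\<exists>no. \<forall>n\<ge>no. norm (char_fun M (X n) t - char_fun M Y t) < r"
  proof (intro exI allI impI)
    fix n assume "n \<ge> N"
    then show "norm (char_fun M (X n) t - char_fun M Y t) < r"
      using norm_char_fun_diff_le[OF P X Y e, of n t] N[of n] te by simp
  qed
qed

text \<open>A random variable is tight; this makes its characteristic function stay away from \<open>0\<close>
  near the origin.\<close>

lemma char_fun_ge_half_near_0:
  assumes P: "prob_space M" and Y: "Y \<in> borel_measurable M"
  obtains \<delta> where "\<delta> > 0" "\<And>t. \<bar>t\<bar> \<le> \<delta> \<Longrightarrow> cmod (char_fun M Y t) \<ge> 1/2"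
proof -
  interpret prob_space M by fact
  define A where "A n = {\<omega> \<in> space M. \<bar>0 - Y \<omega>\<bar> > real n}" for n
  have "(\<lambda>n. measure M (A n)) \<longlonglongrightarrow> measure M (\<Inter>n. A n)"
    by (rule finite_Lim_measure_decseq) (use Y in \<open>auto simp: A_def decseq_def\<close>)
  moreover have "(\<Inter>n. A n) = {}"
  proof safe
    fix \<omega> assume "\<omega> \<in> (\<Inter>n. A n)"
    moreover obtain n where "\<bar>Y \<omega>\<bar> < real n" using reals_Archimedean2 by blast
    ultimately show "\<omega> \<in> {}" unfolding A_def by (auto dest!: spec[of _ n])
  qed
  ultimately have "(\<lambda>n. measure M (A n)) \<longlonglongrightarrow> 0" by simp
  from LIMSEQ_D[OF this, of "1/8"] obtain K where K: "measure M (A K) < 1/8"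
    by auto
  show ?thesis
  proof
    show "1 / (4 * (real K + 1)) > 0" by simp
    fix t :: real assume t: "\<bar>t\<bar> \<le> 1 / (4 * (real K + 1))"
    have "cmod (char_fun M (\<lambda>_. 0) t - char_fun M Y t)
      \<le> \<bar>t\<bar> * (real K + 1) + 2 * measure M {\<omega> \<in> space M. \<bar>0 - Y \<omega>\<bar> > real K + 1}"
      by (rule norm_char_fun_diff_le[OF P _ Y]) auto
    moreover have "measure M {\<omega> \<in> space M. \<bar>0 - Y \<omega>\<bar> > real K + 1} \<le> measure M (A K)"
      unfolding A_def by (rule finite_measure_mono) (use Y in auto)
    moreover have "\<bar>t\<bar> * (real K + 1) \<le> 1/4"
      using t by (simp add: field_simps)
    ultimately have "cmod (1 - char_fun M Y t) \<le> 1/2"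
      using K by (simp add: char_fun_def prob_space)
    then show "cmod (char_fun M Y t) \<ge> 1/2"
      using norm_triangle_ineq2[of 1 "char_fun M Y t"] by simp
  qed
qed

lemma sets_levy_measure: "levy_measure \<nu> \<Longrightarrow> sets \<nu> = sets borel"
  by (simp add: levy_measure_def)

lemma measurable_levy_measure:
  assumes "levy_measure \<nu>" "f \<in> borel_measurable borel"
  shows "f \<in> borel_measurable \<nu>"
  unfolding measurable_cong_sets[OF sets_levy_measure[OF assms(1)] refl] by (rule assms(2))

lemma integrable_levy_min_1_sq:
  assumes "levy_measure \<nu>"
  shows "integrable \<nu> (\<lambda>r. min 1 (r\<^sup>2))"
proof (rule integrableI_bounded)
  show "(\<lambda>r. min 1 (r\<^sup>2)) \<in> borel_measurable \<nu>"
    by (rule measurable_levy_measure[OF assms]) simp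
  show "(\<integral>\<^sup>+ r. ennreal (norm (min 1 (r\<^sup>2))) \<partial>\<nu>) < \<infinity>"
    using assms by (simp add: levy_measure_def)
qed

lemma emeasure_levy_measure_finite:
  assumes lm: "levy_measure \<nu>" and A: "A \<in> sets borel"
    and \<epsilon>: "0 < \<epsilon>" "\<epsilon> \<le> 1" and A_bound: "\<And>r. r \<in> A \<Longrightarrow> \<epsilon> \<le> \<bar>r\<bar>"
  shows "emeasure \<nu> A < \<infinity>"
proof -
  note sets_levy_measure[OF lm, measurable_cong]
  have "indicator A r \<le> ennreal (1 / \<epsilon>\<^sup>2) * ennreal (min 1 (r\<^sup>2))" for r
  proof (cases "r \<in> A")
    case True
    have "\<epsilon>\<^sup>2 \<le> r\<^sup>2"
      using power_mono[OF A_bound[OF True], of 2] \<epsilon> by simp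
    moreover have "\<epsilon>\<^sup>2 \<le> 1"
      using \<epsilon> by (simp add: power_le_one)
    ultimately have "1 \<le> 1 / \<epsilon>\<^sup>2 * min 1 (r\<^sup>2)"
      using \<epsilon> by (simp add: field_simps)
    then have "ennreal 1 \<le> ennreal (1 / \<epsilon>\<^sup>2 * min 1 (r\<^sup>2))"
      by (rule ennreal_leI)
    also have "\<dots> = ennreal (1 / \<epsilon>\<^sup>2) * ennreal (min 1 (r\<^sup>2))"
      by (rule ennreal_mult) auto
    finally show ?thesis
      using True by simp
  qed simp
  then have "(\<integral>\<^sup>+ r. indicator A r \<partial>\<nu>) \<le> (\<integral>\<^sup>+ r. ennreal (1 / \<epsilon>\<^sup>2) * ennreal (min 1 (r\<^sup>2)) \<partial>\<nu>)"
    by (intro nn_integral_mono)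
  moreover have "(\<integral>\<^sup>+ r. indicator A r \<partial>\<nu>) = emeasure \<nu> A"
    using A by (intro nn_integral_indicator) (simp add: sets_levy_measure[OF lm])
  ultimately have "emeasure \<nu> A \<le> (\<integral>\<^sup>+ r. ennreal (1 / \<epsilon>\<^sup>2) * ennreal (min 1 (r\<^sup>2)) \<partial>\<nu>)"
    by simp
  also have "\<dots> = ennreal (1 / \<epsilon>\<^sup>2) * (\<integral>\<^sup>+ r. ennreal (min 1 (r\<^sup>2)) \<partial>\<nu>)"
    by (rule nn_integral_cmult) measurable
  also have "\<dots> < \<infinity>"
    using lm by (simp add: levy_measure_def ennreal_mult_less_top)
  finally show ?thesis .
qed

lemma levy_measure_sigma_finite:
  assumes lm: "levy_measure \<nu>"
  shows "sigma_finite_measure \<nu>"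
proof
  define A where "A n = {r::real. inverse (Suc n) < \<bar>r\<bar>}" for n
  have A_sets: "A n \<in> sets \<nu>" for n
    unfolding A_def sets_levy_measure[OF lm] by measurable
  have "emeasure \<nu> (A n) < \<infinity>" for n
    using A_sets[of n] unfolding sets_levy_measure[OF lm]
    by (rule emeasure_levy_measure_finite[OF lm, where \<epsilon> = "inverse (Suc n)"])
       (auto simp: A_def inverse_le_1_iff)
  moreover have "emeasure \<nu> {0} = 0"
    using lm by (simp add: levy_measure_def)
  ultimately have finite: "\<forall>a\<in>insert {0} (range A). emeasure \<nu> a \<noteq> \<infinity>"
    by (auto simp: less_top)
  have "r \<in> \<Union>(insert {0} (range A))" for r :: real
  proof (cases "r = 0")
    case False
    then have "\<exists>n. inverse (Suc n) < \<bar>r\<bar>"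
      using reals_Archimedean[of "\<bar>r\<bar>"] by simp
    then show ?thesis by (simp add: A_def)
  qed simp
  then have "\<Union>(insert {0} (range A)) = space \<nu>"
    using sets_eq_imp_space_eq[OF sets_levy_measure[OF lm]] by auto
  moreover have "insert {0} (range A) \<subseteq> sets \<nu>"
    using A_sets sets_levy_measure[OF lm] by auto
  ultimately show "\<exists>\<A>. countable \<A> \<and> \<A> \<subseteq> sets \<nu> \<and> \<Union>\<A> = space \<nu> \<and> (\<forall>a\<in>\<A>. emeasure \<nu> a \<noteq> \<infinity>)"
    using finite by (intro exI[of _ "insert {0} (range A)"]) simp
qed

lemma norm_levy_integrand_le:
  "cmod (cis (r * u) - 1 - \<i> * complex_of_real (r * u * indicator {x. \<bar>x\<bar> \<le> 1} r))
     \<le> (2 + u\<^sup>2) * min 1 (r\<^sup>2)"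
proof (cases "\<bar>r\<bar> \<le> 1")
  case True
  have "cmod (cis (r * u) - 1 - \<i> * complex_of_real (r * u * indicator {x. \<bar>x\<bar> \<le> 1} r))
      = cmod (iexp (r * u) - (\<Sum>k\<le>1. (\<i> * (r * u))^k / fact k))"
    using True by (simp add: cis_conv_exp algebra_simps)
  also have "\<dots> \<le> \<bar>r * u\<bar>^(Suc 1) / fact (Suc 1)"
    by (rule iexp_approx1)
  also have "\<dots> = r\<^sup>2 * u\<^sup>2 / 2"
    by (simp add: power_mult_distrib power2_eq_square)
  also have "\<dots> \<le> (2 + u\<^sup>2) * r\<^sup>2"
    by (simp add: field_simps)
  also have "\<dots> = (2 + u\<^sup>2) * min 1 (r\<^sup>2)"
    using True abs_square_le_1[of r] by (simp add: min_def)
  finally show ?thesis .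
next
  case False
  then have "1 \<le> r\<^sup>2" using abs_square_le_1[of r] by linarith
  have "cmod (cis (r * u) - 1 - \<i> * complex_of_real (r * u * indicator {x. \<bar>x\<bar> \<le> 1} r))
      = cmod (cis (r * u) - 1)"
    using False by simp
  also have "\<dots> \<le> cmod (cis (r * u)) + cmod (1::complex)"
    by (rule norm_triangle_ineq4)
  also have "\<dots> \<le> (2 + u\<^sup>2) * min 1 (r\<^sup>2)"
    using \<open>1 \<le> r\<^sup>2\<close> by (simp add: min_def)
  finally show ?thesis .
qed

lemma integrable_levy_integrand:
  assumes lm: "levy_measure \<nu>"
  shows "integrable \<nu> (\<lambda>r. cis (r * u) - 1 - \<i> * complex_of_real (r * u * indicator {x. \<bar>x\<bar> \<le> 1} r))"
proof (rule Bochner_Integration.integrable_bound)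
  show "integrable \<nu> (\<lambda>r. (2 + u\<^sup>2) * min 1 (r\<^sup>2))"
    using integrable_levy_min_1_sq[OF lm] by simp
  have "(\<lambda>r. cis (r * u)) \<in> borel_measurable borel"
    by (intro borel_measurable_continuous_onI continuous_intros)
  moreover have "{x::real. \<bar>x\<bar> \<le> 1} \<in> sets borel"
    by (intro borel_closed closed_Collect_le continuous_intros)
  ultimately have "(\<lambda>r. cis (r * u) - 1 - \<i> * complex_of_real (r * u * indicator {x. \<bar>x\<bar> \<le> 1} r))
      \<in> borel_measurable borel"
    by measurable
  then show "(\<lambda>r. cis (r * u) - 1 - \<i> * complex_of_real (r * u * indicator {x. \<bar>x\<bar> \<le> 1} r))
      \<in> borel_measurable \<nu>"
    by (rule measurable_levy_measure[OF lm])
  show "AE r in \<nu>. norm (cis (r * u) - 1 - \<i> * complex_of_real (r * u * indicator {x. \<bar>x\<bar> \<le> 1} r))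
      \<le> norm ((2 + u\<^sup>2) * min 1 (r\<^sup>2))"
    using norm_levy_integrand_le[of _ u] by auto
qed

lemma integrable_levy_one_minus_cos:
  assumes "levy_measure \<nu>"
  shows "integrable \<nu> (\<lambda>r. 1 - cos (r * u))"
  using integrable_minus[OF integrable_Re[OF integrable_levy_integrand[OF assms, of u]]]
  by (simp add: cis.sel)

lemma Re_levy_exponent_le:
  assumes lm: "levy_measure \<nu>" and a: "a \<ge> 0"
  shows "Re (levy_exponent a \<gamma> \<nu> u) \<le> - (\<integral>r. 1 - cos (r * u) \<partial>\<nu>)"
proof -
  define h where "h r = cis (r * u) - 1 - \<i> * complex_of_real (r * u * indicator {x. \<bar>x\<bar> \<le> 1} r)" for r
  have Re_h: "Re (h r) = - (1 - cos (r * u))" for r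
    by (simp add: h_def cis.sel)
  have "Re (levy_exponent a \<gamma> \<nu> u) = - (a * u\<^sup>2 / 2) + Re (integral\<^sup>L \<nu> h)"
    unfolding levy_exponent_def h_def[abs_def] by simp
  also have "Re (integral\<^sup>L \<nu> h) = (\<integral>r. Re (h r) \<partial>\<nu>)"
    unfolding h_def by (rule integral_Re[OF integrable_levy_integrand[OF lm], symmetric])
  also have "\<dots> = - (\<integral>r. 1 - cos (r * u) \<partial>\<nu>)"
    unfolding Re_h by (rule Bochner_Integration.integral_minus)
  finally show ?thesis
    using a by simp
qed

lemma levy_basis_empty:
  assumes "levy_basis M L a \<gamma> \<nu>"
  shows "AE \<omega> in M. L {} \<omega> = 0"
proof -
  have "{} \<in> bounded_borel" by (simp add: bounded_borel_def)
  then have "AE \<omega> in M. (\<lambda>n. L {} \<omega>) sums L (\<Union>n::nat. {}) \<omega>"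
    using assms unfolding levy_basis_def
    by (auto dest!: spec[of _ "\<lambda>_::nat. {}"] simp: disjoint_family_on_def)
  then show ?thesis
  proof (rule eventually_mono)
    fix \<omega> assume "(\<lambda>n::nat. L {} \<omega>) sums L (\<Union>n::nat. {}) \<omega>"
    then have "(\<lambda>n::nat. L {} \<omega>) \<longlonglongrightarrow> 0"
      by (intro summable_LIMSEQ_zero) (auto simp: sums_iff)
    then show "L {} \<omega> = 0" by (simp add: LIMSEQ_const_iff)
  qed
qed

text \<open>Dropping the empty parts of a simple function makes its sets distinct, hence the
  representation can be indexed by a finite set of pairwise disjoint nonempty sets.\<close>

definition nonempty_parts :: "(real \<times> 'a set) list \<Rightarrow> (real \<times> 'a set) list" where
  "nonempty_parts ps = filter (\<lambda>p. snd p \<noteq> {}) ps"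

lemma set_nonempty_parts: "p \<in> set (nonempty_parts ps) \<longleftrightarrow> p \<in> set ps \<and> snd p \<noteq> {}"
  by (auto simp: nonempty_parts_def)

lemma valid_simple_ConsD:
  assumes "valid_simple (p # ps)"
  shows "\<forall>q\<in>set ps. snd p \<inter> snd q = {}" and "valid_simple ps"
proof -
  show "\<forall>q\<in>set ps. snd p \<inter> snd q = {}"
    using assms unfolding valid_simple_def by (force simp: in_set_conv_nth)
  show "valid_simple ps"
    using assms unfolding valid_simple_def by (fastforce dest: spec[of _ "Suc _"])
qed

lemma valid_simple_bounded_borel: "valid_simple ps \<Longrightarrow> p \<in> set ps \<Longrightarrow> snd p \<in> bounded_borel"
  by (auto simp: valid_simple_def)

lemma valid_simple_disjoint:
  assumes "valid_simple ps" "p \<in> set ps" "q \<in> set ps" "snd p \<noteq> snd q"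
  shows "snd p \<inter> snd q = {}"
proof -
  obtain i j where "i < length ps" "p = ps ! i" "j < length ps" "q = ps ! j"
    using assms(2,3) by (auto simp: in_set_conv_nth)
  then show ?thesis using assms(1,4) unfolding valid_simple_def by (cases "i = j") auto
qed

lemma distinct_map_snd_nonempty_parts: "valid_simple ps \<Longrightarrow> distinct (map snd (nonempty_parts ps))"
proof (induction ps)
  case (Cons p ps)
  then have "valid_simple ps" and "\<forall>q\<in>set ps. snd p \<inter> snd q = {}"
    using valid_simple_ConsD by blast+
  then show ?case using Cons.IH by (auto simp: nonempty_parts_def)
qed (simp add: nonempty_parts_def)

lemma inj_on_snd_nonempty_parts: "valid_simple ps \<Longrightarrow> inj_on snd (set (nonempty_parts ps))"
  using distinct_map_snd_nonempty_parts[of ps] by (simp add: distinct_map)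

lemma distinct_nonempty_parts: "valid_simple ps \<Longrightarrow> distinct (nonempty_parts ps)"
  using distinct_map_snd_nonempty_parts[of ps] by (simp add: distinct_map)

lemma sum_list_nonempty_parts:
  assumes "valid_simple ps" "\<And>p. snd p = {} \<Longrightarrow> f p = 0"
  shows "(\<Sum>p\<leftarrow>ps. f p) = (\<Sum>p\<in>set (nonempty_parts ps). f p)"
proof -
  have "(\<Sum>p\<leftarrow>ps. f p) = (\<Sum>p\<leftarrow>nonempty_parts ps. f p)"
    unfolding nonempty_parts_def using assms(2) by (rule sum_list_map_filter[symmetric]) auto
  also have "\<dots> = (\<Sum>p\<in>set (nonempty_parts ps). f p)"
    by (rule sum_list_distinct_conv_sum_set[OF distinct_nonempty_parts[OF assms(1)]])
  finally show ?thesis .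
qed

lemma simple_fun_of_eq_sum:
  "valid_simple ps \<Longrightarrow> simple_fun_of ps x = (\<Sum>p\<in>set (nonempty_parts ps). fst p * indicator (snd p) x)"
  unfolding simple_fun_of_def by (rule sum_list_nonempty_parts) auto

lemma simple_fun_of_apply:
  fixes h :: "real \<Rightarrow> 'b::comm_monoid_add"
  assumes V: "valid_simple ps" and h0: "h 0 = 0"
  shows "h (simple_fun_of ps x) = (\<Sum>p\<in>set (nonempty_parts ps). if x \<in> snd p then h (fst p) else 0)"
proof (cases "\<exists>p\<in>set (nonempty_parts ps). x \<in> snd p")
  case True
  then obtain p where p: "p \<in> set (nonempty_parts ps)" "x \<in> snd p" by blast
  have other: "x \<notin> snd q" if "q \<in> set (nonempty_parts ps)" "q \<noteq> p" for q
  proof -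
    have "snd q \<noteq> snd p" using inj_on_snd_nonempty_parts[OF V] that p by (auto dest: inj_onD)
    then have "snd q \<inter> snd p = {}"
      using valid_simple_disjoint[OF V] that p by (auto simp: set_nonempty_parts)
    then show ?thesis using p by auto
  qed
  have "simple_fun_of ps x = fst p"
    unfolding simple_fun_of_eq_sum[OF V] sum.remove[OF finite_set p(1)]
    using other p(2) by (simp add: sum.neutral)
  moreover have "(\<Sum>q\<in>set (nonempty_parts ps). if x \<in> snd q then h (fst q) else 0) = h (fst p)"
    unfolding sum.remove[OF finite_set p(1)] using other p(2) by (simp add: sum.neutral)
  ultimately show ?thesis by simp
next
  case False
  then have "simple_fun_of ps x = 0"
    by (simp add: simple_fun_of_eq_sum[OF V] indicator_def)
  then show ?thesis using False h0 by (auto intro!: sum.neutral[symmetric])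
qed

lemma borel_measurable_simple_fun_of:
  assumes V: "valid_simple ps"
  shows "simple_fun_of ps \<in> borel_measurable borel"
proof -
  have "snd p \<in> sets borel" if "p \<in> set (nonempty_parts ps)" for p
    using valid_simple_bounded_borel[OF V] that by (auto simp: set_nonempty_parts bounded_borel_def)
  then show ?thesis
    unfolding simple_fun_of_eq_sum[OF V, abs_def] by measurable
qed

lemma borel_measurable_simple_int:
  assumes LB: "levy_basis M L a \<gamma> \<nu>" and V: "valid_simple ps"
  shows "simple_int L ps UNIV \<in> borel_measurable M"
proof -
  have "L (snd p) \<in> borel_measurable M" if "p \<in> set ps" for p
    using LB valid_simple_bounded_borel[OF V that] by (simp add: levy_basis_def)
  then show ?thesis
    unfolding simple_int_def by (induction ps) (auto simp: fun_eq_iff)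
qed

lemma simple_int_eq_sum:
  assumes LB: "levy_basis M L a \<gamma> \<nu>" and V: "valid_simple ps"
  shows "AE \<omega> in M. simple_int L ps UNIV \<omega> = (\<Sum>p\<in>set (nonempty_parts ps). fst p * L (snd p) \<omega>)"
  using levy_basis_empty[OF LB]
  by (rule eventually_mono) (simp add: simple_int_def sum_list_nonempty_parts[OF V])

text \<open>The product comes from the independence of the basis over the disjoint parts.\<close>

lemma char_fun_simple_int:
  assumes P: "prob_space M" and LB: "levy_basis M L a \<gamma> \<nu>" and V: "valid_simple ps"
  shows "char_fun M (simple_int L ps UNIV) s
    = (\<Prod>p\<in>set (nonempty_parts ps). exp (complex_of_real (measure lebesgue (snd p)) * levy_exponent a \<gamma> \<nu> (s * fst p)))"
proof -
  interpret prob_space M by fact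
  define Q where "Q = set (nonempty_parts ps)"
  define A where "A = snd ` Q"
  define g where "g = the_inv_into Q snd"
  have inj: "inj_on snd Q" unfolding Q_def by (rule inj_on_snd_nonempty_parts[OF V])
  have g_snd: "g (snd p) = p" if "p \<in> Q" for p
    unfolding g_def using the_inv_into_f_f[OF inj that] .
  have finA: "finite A" unfolding A_def Q_def by simp
  have bbA: "A \<subseteq> bounded_borel"
    unfolding A_def Q_def using valid_simple_bounded_borel[OF V] by (auto simp: set_nonempty_parts)
  have disjA: "disjoint A"
    unfolding disjoint_def A_def Q_def using valid_simple_disjoint[OF V] by (auto simp: set_nonempty_parts)
  have indL: "indep_vars (\<lambda>_. borel) L A"
    using LB finA bbA disjA unfolding levy_basis_def by blast
  define Z where "Z S \<omega> = cis (s * fst (g S) * L S \<omega>)" for S \<omega>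
  have Lm: "L S \<in> borel_measurable M" if "S \<in> A" for S
    using LB bbA that by (auto simp: levy_basis_def)
  have Zm: "Z S \<in> borel_measurable M" if "S \<in> A" for S
    unfolding Z_def using borel_measurable_cis_mult[OF Lm[OF that], of "s * fst (g S)"] by (simp add: mult.assoc)
  have indZ: "indep_vars (\<lambda>_. borel) Z A"
  proof -
    have "indep_vars (\<lambda>_. borel) (\<lambda>S \<omega>. (\<lambda>v. cis (s * fst (g S) * v)) (L S \<omega>)) A"
    proof (rule indep_vars_compose2[OF indL])
      fix S
      have "continuous_on UNIV (\<lambda>v. cis (s * fst (g S) * v))" by (intro continuous_intros)
      then show "(\<lambda>v. cis (s * fst (g S) * v)) \<in> borel \<rightarrow>\<^sub>M borel"
        by (rule borel_measurable_continuous_onI)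
    qed
    then show ?thesis unfolding Z_def[abs_def] by simp
  qed
  have Zi: "integrable M (Z S)" if "S \<in> A" for S
    by (rule integrable_const_bound[where B=1]) (auto simp: Z_def Zm[OF that])
  have "AE \<omega> in M. cis (s * simple_int L ps UNIV \<omega>) = (\<Prod>S\<in>A. Z S \<omega>)"
    using simple_int_eq_sum[OF LB V]
  proof (rule eventually_mono)
    fix \<omega> assume e: "simple_int L ps UNIV \<omega> = (\<Sum>p\<in>set (nonempty_parts ps). fst p * L (snd p) \<omega>)"
    have "cis (s * simple_int L ps UNIV \<omega>) = (\<Prod>p\<in>Q. cis (s * fst p * L (snd p) \<omega>))"
      unfolding e Q_def by (simp add: sum_distrib_left mult.assoc cis_sum)
    also have "\<dots> = (\<Prod>S\<in>A. Z S \<omega>)"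
      unfolding A_def prod.reindex[OF inj] by (intro prod.cong) (auto simp: Z_def g_snd)
    finally show "cis (s * simple_int L ps UNIV \<omega>) = (\<Prod>S\<in>A. Z S \<omega>)" .
  qed
  then have "char_fun M (simple_int L ps UNIV) s = (\<integral>\<omega>. (\<Prod>S\<in>A. Z S \<omega>) \<partial>M)"
    unfolding char_fun_def
    by (intro integral_cong_AE borel_measurable_cis_mult borel_measurable_simple_int[OF LB V]
        borel_measurable_prod) (auto simp: Zm)
  also have "\<dots> = (\<Prod>S\<in>A. \<integral>\<omega>. Z S \<omega> \<partial>M)"
    by (rule indep_vars_lebesgue_integral[OF finA indZ Zi])
  also have "\<dots> = (\<Prod>S\<in>A. exp (complex_of_real (measure lebesgue S) * levy_exponent a \<gamma> \<nu> (s * fst (g S))))"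
  proof (rule prod.cong[OF refl])
    fix S assume "S \<in> A"
    then show "(\<integral>\<omega>. Z S \<omega> \<partial>M) = exp (complex_of_real (measure lebesgue S) * levy_exponent a \<gamma> \<nu> (s * fst (g S)))"
      using LB bbA unfolding levy_basis_def Z_def by blast
  qed
  also have "\<dots> = (\<Prod>p\<in>Q. exp (complex_of_real (measure lebesgue (snd p)) * levy_exponent a \<gamma> \<nu> (s * fst p)))"
    unfolding A_def by (subst prod.reindex[OF inj]) (auto simp: g_snd intro!: prod.cong)
  finally show ?thesis by (simp add: Q_def)
qed

lemma levy_sum_le_neg_ln_norm_char_fun:
  fixes ps :: "(real \<times> 'a::euclidean_space set) list"
  assumes P: "prob_space M" and LB: "levy_basis M L a \<gamma> \<nu>" and V: "valid_simple ps"
    and lm: "levy_measure \<nu>" and a: "a \<ge> 0"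
  shows "(\<Sum>p\<in>set (nonempty_parts ps). measure lebesgue (snd p) * (\<integral>r. 1 - cos (r * (s * fst p)) \<partial>\<nu>))
     \<le> - ln (cmod (char_fun M (simple_int L ps UNIV) s))"
proof -
  define Q where "Q = set (nonempty_parts ps)"
  define I where "I p = (\<integral>r. 1 - cos (r * (s * fst p)) \<partial>\<nu>)" for p :: "real \<times> 'a set"
  have "cmod (char_fun M (simple_int L ps UNIV) s)
      = (\<Prod>p\<in>Q. cmod (exp (complex_of_real (measure lebesgue (snd p)) * levy_exponent a \<gamma> \<nu> (s * fst p))))"
    unfolding char_fun_simple_int[OF P LB V] Q_def by (rule prod_norm[symmetric])
  also have "\<dots> = exp (\<Sum>p\<in>Q. measure lebesgue (snd p) * Re (levy_exponent a \<gamma> \<nu> (s * fst p)))"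
    by (simp add: norm_exp_eq_Re exp_sum Q_def)
  also have "\<dots> \<le> exp (- (\<Sum>p\<in>Q. measure lebesgue (snd p) * I p))"
    unfolding sum_negf[symmetric]
  proof (intro exp_mono sum_mono)
    fix p
    have "Re (levy_exponent a \<gamma> \<nu> (s * fst p)) \<le> - I p"
      unfolding I_def by (rule Re_levy_exponent_le[OF lm a])
    then show "measure lebesgue (snd p) * Re (levy_exponent a \<gamma> \<nu> (s * fst p)) \<le> - (measure lebesgue (snd p) * I p)"
      using mult_left_mono[of _ "- I p" "measure lebesgue (snd p)"] by simp
  qed
  finally have "cmod (char_fun M (simple_int L ps UNIV) s) \<le> exp (- (\<Sum>p\<in>Q. measure lebesgue (snd p) * I p))" .
  moreover have "cmod (char_fun M (simple_int L ps UNIV) s) > 0"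
    unfolding char_fun_simple_int[OF P LB V] by (simp add: prod_norm[symmetric] prod_pos)
  ultimately have "ln (cmod (char_fun M (simple_int L ps UNIV) s)) \<le> - (\<Sum>p\<in>Q. measure lebesgue (snd p) * I p)"
    using ln_le_cancel_iff[of _ "exp _"] by (metis exp_gt_zero ln_exp)
  then show ?thesis
    unfolding Q_def I_def by simp
qed

section \<open>The energy \<open>\<integral>\<integral> (1 - cos (t g(x) r)) dx \<nu>(dr)\<close>\<close>

definition cos_energy :: "real measure \<Rightarrow> ('a::euclidean_space \<Rightarrow> real) \<Rightarrow> real \<Rightarrow> ennreal" where
  "cos_energy \<nu> g t = (\<integral>\<^sup>+ r. \<integral>\<^sup>+ x. ennreal (1 - cos (t * g x * r)) \<partial>lborel \<partial>\<nu>)"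

lemma emeasure_lborel_bounded_borel:
  assumes "S \<in> bounded_borel"
  shows "emeasure lborel S = ennreal (measure lebesgue S)"
proof -
  have S: "S \<in> sets borel" "bounded S" using assms by (auto simp: bounded_borel_def)
  then have "emeasure lborel S = ennreal (measure lborel S)"
    using emeasure_bounded_finite[OF S(2)] by (simp add: emeasure_eq_ennreal_measure)
  also have "measure lborel S = measure lebesgue S"
    using S by simp
  finally show ?thesis .
qed

lemma cos_energy_simple_fun:
  assumes V: "valid_simple ps" and lm: "levy_measure \<nu>"
  shows "cos_energy \<nu> (simple_fun_of ps) s
    = ennreal (\<Sum>p\<in>set (nonempty_parts ps). measure lebesgue (snd p) * (\<integral>r. 1 - cos (r * (s * fst p)) \<partial>\<nu>))"
proof -
  define Q where "Q = set (nonempty_parts ps)"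
  have bb: "snd p \<in> bounded_borel" if "p \<in> Q" for p
    using valid_simple_bounded_borel[OF V] that by (auto simp: Q_def set_nonempty_parts)
  then have sb: "snd p \<in> sets lborel" if "p \<in> Q" for p
    using that by (simp add: bounded_borel_def)
  have cos_meas: "(\<lambda>r. ennreal (1 - cos (r * (s * fst p)))) \<in> borel_measurable \<nu>" for p
    by (rule measurable_levy_measure[OF lm]) simp
  have inner: "(\<integral>\<^sup>+ x. ennreal (1 - cos (s * simple_fun_of ps x * r)) \<partial>lborel)
      = (\<Sum>p\<in>Q. ennreal (measure lebesgue (snd p)) * ennreal (1 - cos (r * (s * fst p))))" for r
  proof -
    have "ennreal (1 - cos (s * simple_fun_of ps x * r))
        = (\<Sum>p\<in>Q. if x \<in> snd p then ennreal (1 - cos (s * fst p * r)) else 0)" for x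
      unfolding Q_def using simple_fun_of_apply[OF V, of "\<lambda>v. ennreal (1 - cos (s * v * r))" x] by simp
    also have "\<dots> x = (\<Sum>p\<in>Q. ennreal (1 - cos (s * fst p * r)) * indicator (snd p) x)" for x
      by (intro sum.cong refl) (auto simp: indicator_def)
    finally have "(\<integral>\<^sup>+ x. ennreal (1 - cos (s * simple_fun_of ps x * r)) \<partial>lborel)
        = (\<integral>\<^sup>+ x. (\<Sum>p\<in>Q. ennreal (1 - cos (s * fst p * r)) * indicator (snd p) x) \<partial>lborel)"
      by (intro nn_integral_cong) simp
    also have "\<dots> = (\<Sum>p\<in>Q. \<integral>\<^sup>+ x. ennreal (1 - cos (s * fst p * r)) * indicator (snd p) x \<partial>lborel)"
      using sb by (intro nn_integral_sum) auto
    also have "\<dots> = (\<Sum>p\<in>Q. ennreal (1 - cos (s * fst p * r)) * emeasure lborel (snd p))"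
      using sb by (intro sum.cong refl nn_integral_cmult_indicator) auto
    also have "\<dots> = (\<Sum>p\<in>Q. ennreal (measure lebesgue (snd p)) * ennreal (1 - cos (r * (s * fst p))))"
      using bb by (intro sum.cong refl) (auto simp: emeasure_lborel_bounded_borel mult_ac)
    finally show ?thesis .
  qed
  have "cos_energy \<nu> (simple_fun_of ps) s
      = (\<Sum>p\<in>Q. \<integral>\<^sup>+ r. ennreal (measure lebesgue (snd p)) * ennreal (1 - cos (r * (s * fst p))) \<partial>\<nu>)"
    unfolding cos_energy_def inner using cos_meas by (intro nn_integral_sum) auto
  also have "\<dots> = (\<Sum>p\<in>Q. ennreal (measure lebesgue (snd p)) * ennreal (\<integral>r. 1 - cos (r * (s * fst p)) \<partial>\<nu>))"
    using cos_meas integrable_levy_one_minus_cos[OF lm]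
    by (intro sum.cong refl) (simp add: nn_integral_cmult nn_integral_eq_integral)
  also have "\<dots> = (\<Sum>p\<in>Q. ennreal (measure lebesgue (snd p) * (\<integral>r. 1 - cos (r * (s * fst p)) \<partial>\<nu>)))"
    by (intro sum.cong refl ennreal_mult''[symmetric]) simp
  also have "\<dots> = ennreal (\<Sum>p\<in>Q. measure lebesgue (snd p) * (\<integral>r. 1 - cos (r * (s * fst p)) \<partial>\<nu>))"
    by (intro sum_ennreal mult_nonneg_nonneg integral_nonneg_AE) auto
  finally show ?thesis by (simp add: Q_def)
qed

lemma cos_energy_simple_fun_le:
  assumes "prob_space M" "levy_basis M L a \<gamma> \<nu>" "valid_simple ps" "levy_measure \<nu>" "a \<ge> 0"
  shows "cos_energy \<nu> (simple_fun_of ps) s \<le> ennreal (- ln (cmod (char_fun M (simple_int L ps UNIV) s)))"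
  unfolding cos_energy_simple_fun[OF assms(3,4)]
  by (intro ennreal_leI levy_sum_le_neg_ln_norm_char_fun[OF assms])

lemma one_minus_cos_pow2_mult_le: "1 - cos (2^k * v) \<le> 4^k * (1 - cos (v::real))"
proof (induction k)
  case (Suc k)
  define w where "w = 2^k * v"
  have "1 - cos (2 * w) = 2 * (1 - cos w) * (1 + cos w)"
    using cos_double_cos[of w] by (simp add: power2_eq_square algebra_simps)
  also have "\<dots> \<le> 2 * (1 - cos w) * 2"
    by (intro mult_left_mono) auto
  also have "\<dots> \<le> 4 * (4^k * (1 - cos v))"
    using Suc.IH by (simp add: w_def)
  finally show ?case by (simp add: w_def mult.assoc)
qed simp

lemma cos_energy_pow2_mult_le:
  assumes lm: "levy_measure \<nu>" and g[measurable]: "g \<in> borel_measurable borel"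
  shows "cos_energy \<nu> g (2^k * t) \<le> ennreal (4^k) * cos_energy \<nu> g t"
proof -
  note sets_levy_measure[OF lm, measurable_cong]
  have "cos_energy \<nu> g (2^k * t) \<le> (\<integral>\<^sup>+ r. \<integral>\<^sup>+ x. ennreal (4^k) * ennreal (1 - cos (t * g x * r)) \<partial>lborel \<partial>\<nu>)"
    unfolding cos_energy_def
  proof (intro nn_integral_mono)
    fix r x
    have "1 - cos (2^k * t * g x * r) \<le> 4^k * (1 - cos (t * g x * r))"
      using one_minus_cos_pow2_mult_le[of k "t * g x * r"] by (simp add: mult.assoc)
    then show "ennreal (1 - cos (2^k * t * g x * r)) \<le> ennreal (4^k) * ennreal (1 - cos (t * g x * r))"
      by (simp add: ennreal_mult[symmetric] ennreal_leI)
  qed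
  also have "\<dots> = ennreal (4^k) * cos_energy \<nu> g t"
    unfolding cos_energy_def by (simp add: nn_integral_cmult)
  finally show ?thesis .
qed

lemma cos_energy_simple_int_eventually_le:
  assumes P: "prob_space M" and LB: "levy_basis M L a \<gamma> \<nu>" and lm: "levy_measure \<nu>" and a: "a \<ge> 0"
    and V: "\<And>n. valid_simple (ps n)" and Y: "Y \<in> borel_measurable M"
    and conv: "conv_in_prob M (\<lambda>n. simple_int L (ps n) UNIV) Y"
  obtains C :: real where
    "\<And>t. 0 < t \<Longrightarrow> t \<le> 2 \<Longrightarrow> eventually (\<lambda>n. cos_energy \<nu> (simple_fun_of (ps n)) t \<le> ennreal C) sequentially"
proof -
  obtain \<delta> where \<delta>: "\<delta> > 0" "\<And>t. \<bar>t\<bar> \<le> \<delta> \<Longrightarrow> cmod (char_fun M Y t) \<ge> 1/2"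
    using char_fun_ge_half_near_0[OF P Y] by blast
  obtain k :: nat where k: "2 / \<delta> < 2^k"
    using real_arch_pow[of 2 "2 / \<delta>"] by auto
  have "eventually (\<lambda>n. cos_energy \<nu> (simple_fun_of (ps n)) t \<le> ennreal (4^k * ln 3)) sequentially"
    if t: "0 < t" "t \<le> 2" for t
  proof -
    define u where "u = t / 2^k"
    have "u \<le> 2 / 2^k" using t by (simp add: u_def divide_right_mono)
    also have "\<dots> < \<delta>" using k \<delta>(1) by (simp add: field_simps)
    finally have "cmod (char_fun M Y u) > 1/3"
      using \<delta>(2)[of u] t by (simp add: u_def)
    with tendsto_norm[OF char_fun_tendsto_of_conv_in_prob[OF P borel_measurable_simple_int[OF LB V] Y conv]]
    have "eventually (\<lambda>n. cmod (char_fun M (simple_int L (ps n) UNIV) u) > 1/3) sequentially"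
      by (rule order_tendstoD(1))
    then show ?thesis
    proof (rule eventually_mono)
      fix n assume n: "cmod (char_fun M (simple_int L (ps n) UNIV) u) > 1/3"
      then have "ln (1/3) < ln (cmod (char_fun M (simple_int L (ps n) UNIV) u))"
        by (subst ln_less_cancel_iff) auto
      then have "- ln (cmod (char_fun M (simple_int L (ps n) UNIV) u)) \<le> ln 3"
        by (simp add: ln_div)
      then have "cos_energy \<nu> (simple_fun_of (ps n)) u \<le> ennreal (ln 3)"
        using cos_energy_simple_fun_le[OF P LB V lm a, of n u] order_trans ennreal_leI by blast
      then have "ennreal (4^k) * cos_energy \<nu> (simple_fun_of (ps n)) u \<le> ennreal (4^k * ln 3)"
        by (simp add: ennreal_mult mult_left_mono)
      moreover have "cos_energy \<nu> (simple_fun_of (ps n)) t \<le> ennreal (4^k) * cos_energy \<nu> (simple_fun_of (ps n)) u"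
        using cos_energy_pow2_mult_le[OF lm borel_measurable_simple_fun_of[OF V], where k = k and t = u] by (simp add: u_def)
      ultimately show "cos_energy \<nu> (simple_fun_of (ps n)) t \<le> ennreal (4^k * ln 3)"
        by (rule order_trans[rotated])
    qed
  qed
  then show ?thesis by (rule that)
qed

text \<open>Fatou's lemma, applied in \<open>x\<close> and then in \<open>r\<close>.\<close>

lemma cos_energy_le_liminf:
  assumes lm: "levy_measure \<nu>" and g[measurable]: "\<And>n. g n \<in> borel_measurable borel"
    and lim: "AE x in lborel. (\<lambda>n. g n x) \<longlonglongrightarrow> h x"
  shows "cos_energy \<nu> h t \<le> liminf (\<lambda>n. cos_energy \<nu> (g n) t)"
proof -
  note sets_levy_measure[OF lm, measurable_cong]
  have "(\<integral>\<^sup>+ x. ennreal (1 - cos (t * h x * r)) \<partial>lborel)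
      = (\<integral>\<^sup>+ x. liminf (\<lambda>n. ennreal (1 - cos (t * g n x * r))) \<partial>lborel)" for r
  proof (rule nn_integral_cong_AE)
    show "AE x in lborel. ennreal (1 - cos (t * h x * r)) = liminf (\<lambda>n. ennreal (1 - cos (t * g n x * r)))"
      using lim
    proof (rule eventually_mono)
      fix x assume "(\<lambda>n. g n x) \<longlonglongrightarrow> h x"
      then have "(\<lambda>n. ennreal (1 - cos (t * g n x * r))) \<longlonglongrightarrow> ennreal (1 - cos (t * h x * r))"
        by (intro tendsto_ennrealI tendsto_intros)
      then show "ennreal (1 - cos (t * h x * r)) = liminf (\<lambda>n. ennreal (1 - cos (t * g n x * r)))"
        by (rule lim_imp_Liminf[OF sequentially_bot, symmetric])
    qed
  qed
  also have "\<dots> r \<le> liminf (\<lambda>n. \<integral>\<^sup>+ x. ennreal (1 - cos (t * g n x * r)) \<partial>lborel)" for r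
    by (rule nn_integral_liminf) measurable
  finally have "cos_energy \<nu> h t \<le> (\<integral>\<^sup>+ r. liminf (\<lambda>n. \<integral>\<^sup>+ x. ennreal (1 - cos (t * g n x * r)) \<partial>lborel) \<partial>\<nu>)"
    unfolding cos_energy_def by (intro nn_integral_mono)
  also have "\<dots> \<le> liminf (\<lambda>n. cos_energy \<nu> (g n) t)"
    unfolding cos_energy_def by (rule nn_integral_liminf) measurable
  finally show ?thesis .
qed

lemma cos_energy_bounded_of_conv_in_prob:
  assumes P: "prob_space M" and LB: "levy_basis M L a \<gamma> \<nu>" and lm: "levy_measure \<nu>" and a: "a \<ge> 0"
    and V: "\<And>n. valid_simple (ps n)" and Y: "Y \<in> borel_measurable M"
    and conv: "conv_in_prob M (\<lambda>n. simple_int L (ps n) UNIV) Y"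
    and lim: "AE x in lborel. (\<lambda>n. simple_fun_of (ps n) x) \<longlonglongrightarrow> f x"
  obtains C :: real where "\<And>t. 0 \<le> t \<Longrightarrow> t \<le> 2 \<Longrightarrow> cos_energy \<nu> f t \<le> ennreal C"
proof -
  obtain C where C: "\<And>t. 0 < t \<Longrightarrow> t \<le> 2 \<Longrightarrow>
      eventually (\<lambda>n. cos_energy \<nu> (simple_fun_of (ps n)) t \<le> ennreal C) sequentially"
    using cos_energy_simple_int_eventually_le[OF P LB lm a V Y conv] by blast
  have "cos_energy \<nu> f t \<le> ennreal C" if t: "0 \<le> t" "t \<le> 2" for t
  proof (cases "t = 0")
    case True
    then show ?thesis by (simp add: cos_energy_def)
  next
    case False
    have "cos_energy \<nu> f t \<le> liminf (\<lambda>n. cos_energy \<nu> (simple_fun_of (ps n)) t)"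
      by (rule cos_energy_le_liminf[OF lm borel_measurable_simple_fun_of[OF V] lim])
    also have "\<dots> \<le> ennreal C"
      using C[of t] False t by (intro Liminf_le) auto
    finally show ?thesis .
  qed
  then show ?thesis by (rule that)
qed

section \<open>From the energy bound to the distribution function\<close>

lemma one_le_nn_integral_one_minus_cos:
  assumes u: "1 \<le> \<bar>u\<bar>"
  shows "1 \<le> (\<integral>\<^sup>+ t. indicator {0..2} t * ennreal (1 - cos (t * u)) \<partial>lborel)"
proof -
  have u0: "u \<noteq> 0" using u by auto
  have "((\<lambda>t. 1 - cos (t * u)) has_integral ((2 - sin (2 * u) / u) - (0 - sin (0 * u) / u))) {0..2::real}"
  proof (rule fundamental_theorem_of_calculus)
    fix t :: real assume "t \<in> {0..2}"
    have "((\<lambda>t. t - sin (t * u) / u) has_real_derivative (1 - cos (t * u) * u / u)) (at t)"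
      by (auto intro!: derivative_eq_intros)
    then show "((\<lambda>t. t - sin (t * u) / u) has_vector_derivative (1 - cos (t * u))) (at t within {0..2})"
      using u0 by (simp add: has_real_derivative_iff_has_vector_derivative[symmetric] has_field_derivative_at_within)
  qed simp
  then have "(\<integral>\<^sup>+ t. ennreal (indicator {0..2} t * (1 - cos (t * u))) \<partial>lborel) = ennreal (2 - sin (2 * u) / u)"
    by (intro nn_integral_has_integral_lebesgue) auto
  moreover have "sin (2 * u) / u \<le> 1"
  proof -
    have "\<bar>sin (2 * u) / u\<bar> \<le> 1 / \<bar>u\<bar>"
      using u0 by (simp add: abs_divide divide_right_mono)
    also have "\<dots> \<le> 1" using u by simp
    finally show ?thesis by linarith
  qed
  moreover have "ennreal (indicator {0..2} t * (1 - cos (t * u))) = indicator {0..2} t * ennreal (1 - cos (t * u))" for t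
    by (simp add: indicator_def)
  ultimately show ?thesis by (simp add: ennreal_1[symmetric] del: ennreal_1)
qed

lemma emeasure_le_nn_integral_one_minus_cos:
  fixes f :: "'a::euclidean_space \<Rightarrow> real"
  assumes f[measurable]: "f \<in> borel_measurable borel"
  shows "emeasure lborel {x. 1 \<le> \<bar>f x * r\<bar>}
    \<le> (\<integral>\<^sup>+ t. indicator {0..2} t * (\<integral>\<^sup>+ x. ennreal (1 - cos (t * f x * r)) \<partial>lborel) \<partial>lborel)"
proof -
  have "emeasure lborel {x. 1 \<le> \<bar>f x * r\<bar>} = (\<integral>\<^sup>+ x. indicator {x. 1 \<le> \<bar>f x * r\<bar>} x \<partial>lborel)"
    by (rule nn_integral_indicator[symmetric]) measurable
  also have "\<dots> \<le> (\<integral>\<^sup>+ x. \<integral>\<^sup>+ t. indicator {0..2} t * ennreal (1 - cos (t * f x * r)) \<partial>lborel \<partial>lborel)"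
  proof (rule nn_integral_mono)
    fix x
    show "indicator {x. 1 \<le> \<bar>f x * r\<bar>} x \<le> (\<integral>\<^sup>+ t. indicator {0..2} t * ennreal (1 - cos (t * f x * r)) \<partial>lborel)"
      using one_le_nn_integral_one_minus_cos[of "f x * r"] by (simp add: indicator_def mult.assoc)
  qed
  also have "\<dots> = (\<integral>\<^sup>+ t. \<integral>\<^sup>+ x. indicator {0..2} t * ennreal (1 - cos (t * f x * r)) \<partial>lborel \<partial>lborel)"
    by (rule lborel_pair.Fubini'[symmetric]) measurable
  also have "\<dots> = (\<integral>\<^sup>+ t. indicator {0..2} t * (\<integral>\<^sup>+ x. ennreal (1 - cos (t * f x * r)) \<partial>lborel) \<partial>lborel)"
    by (intro nn_integral_cong nn_integral_cmult) measurable
  finally show ?thesis .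
qed

lemma nn_integral_one_minus_cos_le_cos_energy_bound:
  fixes f :: "'a::euclidean_space \<Rightarrow> real"
  assumes lm: "levy_measure \<nu>" and f[measurable]: "f \<in> borel_measurable borel"
    and C: "\<And>t. 0 \<le> t \<Longrightarrow> t \<le> 2 \<Longrightarrow> cos_energy \<nu> f t \<le> C"
  shows "(\<integral>\<^sup>+ r. \<integral>\<^sup>+ t. indicator {0..2} t * (\<integral>\<^sup>+ x. ennreal (1 - cos (t * f x * r)) \<partial>lborel) \<partial>lborel \<partial>\<nu>)
    \<le> 2 * C"
proof -
  note sets_levy_measure[OF lm, measurable_cong]
  interpret \<nu>: sigma_finite_measure \<nu>
    by (rule levy_measure_sigma_finite[OF lm])
  interpret pair_sigma_finite \<nu> lborel ..
  have "(\<integral>\<^sup>+ r. \<integral>\<^sup>+ t. indicator {0..2} t * (\<integral>\<^sup>+ x. ennreal (1 - cos (t * f x * r)) \<partial>lborel) \<partial>lborel \<partial>\<nu>)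
      = (\<integral>\<^sup>+ t. \<integral>\<^sup>+ r. indicator {0..2} t * (\<integral>\<^sup>+ x. ennreal (1 - cos (t * f x * r)) \<partial>lborel) \<partial>\<nu> \<partial>lborel)"
    by (rule Fubini'[symmetric]) measurable
  also have "\<dots> = (\<integral>\<^sup>+ t. indicator {0..2} t * cos_energy \<nu> f t \<partial>lborel)"
    unfolding cos_energy_def by (intro nn_integral_cong nn_integral_cmult) measurable
  also have "\<dots> \<le> (\<integral>\<^sup>+ t. C * indicator {0..2::real} t \<partial>lborel)"
    using C by (intro nn_integral_mono) (simp add: indicator_def)
  also have "\<dots> = 2 * C"
    by (simp add: nn_integral_cmult_indicator mult.commute)
  finally show ?thesis .
qed

lemma distrib_fun_le_emeasure:
  fixes f g :: "'a::euclidean_space \<Rightarrow> real"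
  assumes f[measurable]: "f \<in> borel_measurable borel"
    and dom: "AE x in lebesgue. \<bar>g x\<bar> \<le> \<bar>f x\<bar>" and r: "r \<noteq> 0"
  shows "distrib_fun g (1 / \<bar>r\<bar>) \<le> emeasure lborel {x. 1 \<le> \<bar>f x * r\<bar>}"
proof -
  have S: "{x. 1 \<le> \<bar>f x * r\<bar>} \<in> sets borel"
    by measurable
  have "distrib_fun g (1 / \<bar>r\<bar>) \<le> emeasure lebesgue {x. 1 \<le> \<bar>f x * r\<bar>}"
    unfolding distrib_fun_def
  proof (rule emeasure_mono_AE)
    show "{x. 1 \<le> \<bar>f x * r\<bar>} \<in> sets lebesgue"
      using S by (simp add: sets_completionI_sets)
    show "AE x in lebesgue. x \<in> {x. 1 / \<bar>r\<bar> < \<bar>g x\<bar>} \<longrightarrow> x \<in> {x. 1 \<le> \<bar>f x * r\<bar>}"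
      using dom
    proof (rule eventually_mono)
      fix x assume "\<bar>g x\<bar> \<le> \<bar>f x\<bar>"
      then have "\<bar>g x\<bar> * \<bar>r\<bar> \<le> \<bar>f x * r\<bar>"
        by (simp add: abs_mult mult_right_mono)
      then show "x \<in> {x. 1 / \<bar>r\<bar> < \<bar>g x\<bar>} \<longrightarrow> x \<in> {x. 1 \<le> \<bar>f x * r\<bar>}"
        using r by (auto simp: field_simps)
    qed
  qed
  also have "\<dots> = emeasure lborel {x. 1 \<le> \<bar>f x * r\<bar>}"
    using S by (simp add: emeasure_completion)
  finally show ?thesis .
qed

text \<open>The a.e. limit \<open>f\<close> of the simple functions is taken Borel measurable, unlike the
  integrand \<open>g\<close> itself.\<close>

lemma rr_integralE:
  fixes g :: "'a::euclidean_space \<Rightarrow> real"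
  assumes "rr_integral M L g X"
  obtains ps f where "\<And>n. valid_simple (ps n)" "X \<in> borel_measurable M"
    "conv_in_prob M (\<lambda>n. simple_int L (ps n) UNIV) X" "f \<in> borel_measurable borel"
    "AE x in lborel. (\<lambda>n. simple_fun_of (ps n) x) \<longlonglongrightarrow> f x" "AE x in lebesgue. f x = g x"
proof -
  obtain ps where V: "\<And>n. valid_simple (ps n)"
    and conv_ae: "AE x in lebesgue. (\<lambda>n. simple_fun_of (ps n) x) \<longlonglongrightarrow> g x"
    and X: "X \<in> borel_measurable M" "conv_in_prob M (\<lambda>n. simple_int L (ps n) UNIV) X"
    using assms unfolding rr_integral_def by blast
  define f where "f x = lim (\<lambda>n. simple_fun_of (ps n) x)" for x
  have "f \<in> borel_measurable borel"
    unfolding f_def[abs_def] by (rule borel_measurable_lim_metric[OF borel_measurable_simple_fun_of[OF V]])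
  moreover have lim_f: "AE x in lborel. (\<lambda>n. simple_fun_of (ps n) x) \<longlonglongrightarrow> f x \<and> f x = g x"
    using conv_ae unfolding AE_completion_iff by (rule eventually_mono) (auto simp: f_def limI)
  moreover have "AE x in lebesgue. f x = g x"
    using AE_completion[OF lim_f] by (rule eventually_mono) simp
  ultimately show ?thesis
    using that[OF V X] by (auto elim: eventually_mono)
qed

theorem corollary3p9:
  fixes G :: "real^'n \<Rightarrow> real"
    and M :: "'w measure"
    and Ldot :: "(real^'n \<Rightarrow> real) \<Rightarrow> 'w \<Rightarrow> real"
    and L :: "(real^'n) set \<Rightarrow> 'w \<Rightarrow> real"
    and s :: "(real^'n \<Rightarrow> real) \<Rightarrow> 'w \<Rightarrow> real"
    and a \<gamma> :: real and \<nu> :: "real measure"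
  assumes "prob_space M"
    and "a \<ge> 0" and "levy_measure \<nu>"
    and "locally_integrable G"
    and "(AE x in lebesgue. G x \<ge> 0) \<or> (AE x in lebesgue. G x \<le> 0)"
    and "levy_white_noise M Ldot a \<gamma> \<nu>"
    and "levy_basis M L a \<gamma> \<nu>"
    and "\<forall>\<phi> \<in> test_functions. rr_integral M L \<phi> (Ldot \<phi>)"
    and "gen_random_process M s"
    and "\<forall>\<phi> \<in> test_functions. rr_integral M L (convol G \<phi>) (s \<phi>)"
    and "R > 0"
  shows "(\<integral>\<^sup>+ r. indicator {r. \<bar>r\<bar> > 1} r * distrib_fun (ball_avg G R) (1 / \<bar>r\<bar>) \<partial>\<nu>) < \<infinity>"
proof -
  note P = assms(1) and a = assms(2) and lm = assms(3) and LB = assms(7)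
  define \<phi> where "\<phi> = (bump (R + 1) :: real^'n \<Rightarrow> real)"
  have "rr_integral M L (convol G \<phi>) (s \<phi>)"
    using assms(10) bump_in_test_functions unfolding \<phi>_def by blast
  then obtain ps f where V: "\<And>n. valid_simple (ps n)" and Y: "s \<phi> \<in> borel_measurable M"
    and conv: "conv_in_prob M (\<lambda>n. simple_int L (ps n) UNIV) (s \<phi>)" and f: "f \<in> borel_measurable borel"
    and lim: "AE x in lborel. (\<lambda>n. simple_fun_of (ps n) x) \<longlonglongrightarrow> f x"
    and f_eq: "AE x in lebesgue. f x = convol G \<phi> x"
    by (rule rr_integralE) blast
  obtain C where C: "\<And>t. 0 \<le> t \<Longrightarrow> t \<le> 2 \<Longrightarrow> cos_energy \<nu> f t \<le> ennreal C"
    using cos_energy_bounded_of_conv_in_prob[OF P LB lm a V Y conv lim] by blast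
  have dom: "AE x in lebesgue. \<bar>ball_avg G R x\<bar> \<le> \<bar>f x\<bar>"
    using f_eq by (rule eventually_mono)
      (simp add: \<phi>_def ball_avg_nonneg ball_avg_le_abs_convol_bump[OF assms(4,5)])
  have "(\<integral>\<^sup>+ r. indicator {r. \<bar>r\<bar> > 1} r * distrib_fun (ball_avg G R) (1 / \<bar>r\<bar>) \<partial>\<nu>)
      \<le> (\<integral>\<^sup>+ r. \<integral>\<^sup>+ t. indicator {0..2} t * (\<integral>\<^sup>+ x. ennreal (1 - cos (t * f x * r)) \<partial>lborel) \<partial>lborel \<partial>\<nu>)"
    using order_trans[OF distrib_fun_le_emeasure[OF f dom] emeasure_le_nn_integral_one_minus_cos[OF f]]
    by (intro nn_integral_mono) (simp add: indicator_def)
  also have "\<dots> \<le> 2 * ennreal C"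
    by (rule nn_integral_one_minus_cos_le_cos_energy_bound[OF lm f C])
  also have "\<dots> < \<infinity>"
    by (simp add: ennreal_mult_less_top)
  finally show ?thesis .
qed

end
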